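(* Let $\mathcal{R}$ be a cyclic proof system with finitely many sequents and finitely many rules, induced by a trace interpretation $\iota\colon\mathcal{R}\to\mathcal{T}_\mathcal{A}$ for an activation algebra $\mathcal{A}$. Then the map $\mathit{expand}\colon\mathrm{S}(\mathcal{R})\to\mathrm{R}(\mathcal{R})$, which is the identity on sequents $\Gamma;(\Theta,\sigma)$ and sends each rule $R(\Theta,\sigma)$ of $\mathrm{S}(\mathcal{R})$ to the $\mathrm{R}(\mathcal{R})$-preproof described below, is a proof morphism: for every $\mathrm{S}(\mathcal{R})$-proof $\Pi$, $\mathit{expand}(\Pi)$ is an $\mathrm{R}(\mathcal{R})$-proof.
   Context: An activation algebra $\mathcal{A}=(A,\le,\vee,0,\alpha)$ is a finite join-semilattice with least element $0$ and distinguished $\alpha\neq0$; $\mathcal{T}_\mathcal{A}$ has finite sets as objects and relations $R\subseteq X\times A\times Y$ as morphisms $X\to Y$. A trace interpretation $\iota\colon\mathcal{R}\to\mathcal{T}_\mathcal{A}$ of a derivation system (sequents $\textsc{Seq}$, rules with conclusion $\Gamma$ and premises $\Delta_1,\dots,\Delta_n$) assigns each sequent an object $\iota(\Gamma)$ and each rule morphisms $r_i\colon\iota(\Gamma)\to\iota(\Delta_i)$. Cyclic trees and preproofs: a cyclic tree is a finite tree $T\subseteq\omega^*$ (prefix-closed) with a partial map $\beta$ from leaves (buds) to inner nodes (companions), $\beta(t)$ a strict prefix of $t$; a preproof labels nodes with sequents (bud and companion equal), and each non-bud non-open node with a rule whose conclusion is its label and premises are its children's labels. A preproof morphism $f$ maps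 sequents to sequents and rules to preproofs with matching endsequent and open leaves, translating preproofs by substitution; it is a proof morphism if it maps proofs to proofs. Safra boards: with a fixed countable chip set $\mathcal{C}\supseteq\omega$, a Safra board on finite $X$ is $(\Theta,\sigma)$, $\Theta\subseteq\mathcal{C}$ finite with a linear order (control), $\sigma\colon X\times A\to\mathcal{P}(\mathcal{P}(\Theta))$ with every chip in some stack; $\gamma$ is covered iff it is the maximum of no stack; stacks are ordered by $S<_\Theta S'$ iff $S$ contains the least element of $S\triangle S'$. Transitions: $r$-successor for $r\colon X\to Y$ (set $\sigma^*(y,a)=\{S\in\sigma(x,b)\mid(x,c,y)\in r,\ a=b\vee c\}$; for every $y$ with $\sigma^*(y,\alpha)\ne\emptyset$ add one fresh chip $\iota(y)\notin\Theta$ (distinct for distinct $y$, placed above all old chips) to every stack of $\sigma^*(y,\alpha)$ and move these stacks to $(y,0)$, leaving $(y,\alpha)$ empty); weakening (remove stacks); thinning (keep only the $<_\Theta$-least stack at each position); population (add the empty stack at some positions $(x,0)$); $\gamma$-reset for covered $\gamma$ (replace each stack $S\ni\gamma$ by $\{z\in S\mid z\le\gamma\}$). The new control always consists of the chips still occurring (old ones in inherited order). A greedy $r$-transition from $(\Theta,\sigma)$: with $\gamma_1<\dots<\gamma_k$ all covered chips, do resets $R_{\gamma_k},\dots,R_{\gamma_1}$; then populate exactly the positions $(x,0)$ with no stack by $\{\emptyset\}$; then an $r$-successor; then the thinning. For $K$ at least the size of the sets involved, a board is $K$-sparse if $\Theta\subseteq\{n\in\omega\mid n<K(|A|+1)\}$,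 $|\Theta|\le K|A|$, at most one stack per position and no stack at any $(x,\alpha)$. For $K$-sparse $(\Theta,\sigma)$ on $X$ and $r\colon X\to Y$ a greedy $r$-transition to a $K$-sparse board $(\Theta',\sigma')$ exists such that $\Theta'\cap\Theta$ equals the intersection of all intermediate controls; fix one such and write $g_r(\Theta,\sigma)$ for its result. Reset proof system $\mathrm{R}(\mathcal{R})$: sequents $\Gamma;(\Theta,\sigma)$ with $(\Theta,\sigma)$ a board on $\iota(\Gamma)$; structural rules Weak, $\textsc{Reset}_\gamma$, Pop (single premise obtained by a weakening, $\gamma$-reset, resp. population of the conclusion's board), and for each $\mathcal{R}$-rule $R$ and board $(\Theta,\sigma)$ on $\iota(\Gamma)$ a rule with conclusion $\Gamma;(\Theta,\sigma)$ and premises $\Delta_i;(\Theta_i,\sigma_i)$, $(\Theta_i,\sigma_i)$ an $r_i$-successor. For a bud $t$, let $\Theta$ be the longest common prefix of the controls on the path from $\beta(t)$ to $t$; an invariant is a nonempty prefix $\theta$ of $\Theta$ with $\textsc{Reset}_{\max(\theta)}$ applied on that path; an assumption-free preproof is a proof iff every bud's path has an invariant. Proof search system $\mathrm{S}(\mathcal{R})$: let $K=\max\{|\iota(\Gamma)|\mid\Gamma\in\textsc{Seq}\}$. Sequents are $\Gamma;(\Theta,\sigma)$ with $(\Theta,\sigma)$ a $K$-sparse board on $\iota(\Gamma)$. For each $\mathcal{R}$-rule $R$ (conclusion $\Gamma$, premises $\Delta_i$, maps $r_i$) and each $K$-sparse $(\Theta,\sigma)$ on $\iota(\Gamma)$ there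 is a rule $R(\Theta,\sigma)$ with conclusion $\Gamma;(\Theta,\sigma)$ and premises $\Delta_i;g_{r_i}(\Theta,\sigma)$. An assumption-free $\mathrm{S}(\mathcal{R})$-preproof is a proof iff along every infinite path $(\Gamma_i;(\Theta_i,\sigma_i))_i$ there are $N$ and $\gamma\in\bigcap_{i\ge N}\Theta_i$ that is covered in infinitely many $(\Theta_i,\sigma_i)$. Translation of $R(\Theta,\sigma)$ by $\mathit{expand}$: the greedy $r_i$-transitions share their reset steps $R_{\gamma_k},\dots,R_{\gamma_1}$ and population step, yielding a board $(\Theta_p,\sigma_p)$, followed by $r_i$-successors $(\Theta_i^*,\sigma_i^* )$ and thinnings to $(\Theta_i,\sigma_i)$. $\mathit{expand}(R(\Theta,\sigma))$ is the $\mathrm{R}(\mathcal{R})$-preproof: $\textsc{Reset}_{\gamma_k},\dots,\textsc{Reset}_{\gamma_1}$ steps on $\Gamma$, then Pop to $\Gamma;(\Theta_p,\sigma_p)$, then the annotated rule $R$ with premises $\Delta_i;(\Theta_i^*,\sigma_i^* )$, each followed by Weak to the open leaf $\Delta_i;(\Theta_i,\sigma_i)$. *)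

theory Defs
  imports Main "HOL-Library.Sublist"
begin

text \<open>Chips are natural numbers (chip set C = omega). A control is a duplicate-free
list of chips (list order = the linear order on chips). sigma x a is the set of stacks
at position (x,a).\<close>

type_synonym ('x,'a) board = "nat list \<times> ('x \<Rightarrow> 'a \<Rightarrow> nat set set)"

definition chips :: "('x \<Rightarrow> 'a \<Rightarrow> nat set set) \<Rightarrow> nat set" where
  "chips \<sigma> = \<Union>{S. \<exists>x a. S \<in> \<sigma> x a}"

definition chip_le :: "nat list \<Rightarrow> nat \<Rightarrow> nat \<Rightarrow> bool" where
  "chip_le \<Theta> z w \<longleftrightarrow> (\<exists>i j. i \<le> j \<and> j < length \<Theta> \<and> \<Theta> ! i = z \<and> \<Theta> ! j = w)"

definition board_on :: "'x set \<Rightarrow> ('x,'a) board \<Rightarrow> bool" where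
  "board_on X B \<longleftrightarrow> finite X \<and> distinct (fst B)
     \<and> (\<forall>x a. x \<notin> X \<longrightarrow> snd B x a = {})
     \<and> (\<forall>x a S. S \<in> snd B x a \<longrightarrow> S \<subseteq> set (fst B))
     \<and> set (fst B) \<subseteq> chips (snd B)"

definition is_max_of :: "nat list \<Rightarrow> nat \<Rightarrow> nat set \<Rightarrow> bool" where
  "is_max_of \<Theta> \<gamma> S \<longleftrightarrow> \<gamma> \<in> S \<and> (\<forall>z\<in>S. chip_le \<Theta> z \<gamma>)"

definition covered :: "('x,'a) board \<Rightarrow> nat \<Rightarrow> bool" where
  "covered B \<gamma> \<longleftrightarrow> \<gamma> \<in> set (fst B) \<and> \<not> (\<exists>x a S. S \<in> snd B x a \<and> is_max_of (fst B) \<gamma> S)"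

definition stack_less :: "nat list \<Rightarrow> nat set \<Rightarrow> nat set \<Rightarrow> bool" where
  "stack_less \<Theta> S S' \<longleftrightarrow> (\<exists>z \<in> S - S'. \<forall>w \<in> (S - S') \<union> (S' - S). chip_le \<Theta> z w)"

definition restrict_ctrl :: "nat list \<Rightarrow> ('x \<Rightarrow> 'a \<Rightarrow> nat set set) \<Rightarrow> nat list" where
  "restrict_ctrl \<Theta> \<sigma> = filter (\<lambda>z. z \<in> chips \<sigma>) \<Theta>"

text \<open>r-successor (relation, since the fresh chips and their mutual order are chosen).\<close>
definition successor :: "'a::{semilattice_sup,order_bot} \<Rightarrow> ('x \<times> 'a \<times> 'x) set
     \<Rightarrow> ('x,'a) board \<Rightarrow> ('x,'a) board \<Rightarrow> bool" where
  "successor \<alpha> r B B' \<longleftrightarrow>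
     (let \<Theta> = fst B; \<sigma> = snd B;
          \<sigma>s = (\<lambda>y a. {S. \<exists>x b c. S \<in> \<sigma> x b \<and> (x, c, y) \<in> r \<and> a = sup b c});
          Ya = {y. \<sigma>s y \<alpha> \<noteq> {}}
      in \<exists>fr ns. inj_on fr Ya \<and> fr ` Ya \<inter> set \<Theta> = {}
           \<and> snd B' = (\<lambda>y a. if a = \<alpha> then {}
                              else if a = bot then \<sigma>s y bot \<union> (insert (fr y)) ` \<sigma>s y \<alpha>
                              else \<sigma>s y a)
           \<and> distinct ns \<and> set ns = fr ` Ya
           \<and> fst B' = restrict_ctrl \<Theta> (snd B') @ ns)"

definition weakening :: "('x,'a) board \<Rightarrow> ('x,'a) board \<Rightarrow> bool" where
  "weakening B B' \<longleftrightarrow> (\<forall>x a. snd B' x a \<subseteq> snd B x a) \<and> fst B' = restrict_ctrl (fst B) (snd B')"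

definition reset_board :: "nat \<Rightarrow> ('x,'a) board \<Rightarrow> ('x,'a) board" where
  "reset_board \<gamma> B =
     (let \<sigma>' = (\<lambda>x a. (\<lambda>S. if \<gamma> \<in> S then {z\<in>S. chip_le (fst B) z \<gamma>} else S) ` snd B x a)
      in (restrict_ctrl (fst B) \<sigma>', \<sigma>'))"

definition pop_board :: "'x set \<Rightarrow> ('x,'a::bot) board \<Rightarrow> ('x,'a) board" where
  "pop_board P B = (fst B, \<lambda>x a. if a = bot \<and> x \<in> P then insert {} (snd B x a) else snd B x a)"

definition thin_board :: "('x,'a) board \<Rightarrow> ('x,'a) board" where
  "thin_board B =
     (let \<sigma>' = (\<lambda>x a. {S \<in> snd B x a. \<forall>S' \<in> snd B x a. S' \<noteq> S \<longrightarrow> stack_less (fst B) S S'})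
      in (restrict_ctrl (fst B) \<sigma>', \<sigma>'))"

text \<open>Covered chips in increasing order; resets are applied from the largest down.\<close>
definition cov_list :: "('x,'a) board \<Rightarrow> nat list" where
  "cov_list B = filter (covered B) (fst B)"

definition reset_stage :: "('x,'a) board \<Rightarrow> nat \<Rightarrow> ('x,'a) board" where
  "reset_stage B j = fold reset_board (take j (rev (cov_list B))) B"

definition greedy_pre :: "'x set \<Rightarrow> ('x,'a::bot) board \<Rightarrow> ('x,'a) board" where
  "greedy_pre X B = (let B' = reset_stage B (length (cov_list B))
                     in pop_board {x \<in> X. snd B' x bot = {}} B')"

definition sparse :: "'a \<Rightarrow> nat \<Rightarrow> 'x set \<Rightarrow> ('x,'a::finite) board \<Rightarrow> bool" where
  "sparse \<alpha> K X B \<longleftrightarrow> board_on X B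
     \<and> set (fst B) \<subseteq> {n. n < K * (card (UNIV :: 'a set) + 1)}
     \<and> length (fst B) \<le> K * card (UNIV :: 'a set)
     \<and> (\<forall>x a. card (snd B x a) \<le> 1)
     \<and> (\<forall>x. snd B x \<alpha> = {})"

definition Kmax :: "('s::finite \<Rightarrow> 'x set) \<Rightarrow> nat" where
  "Kmax \<iota> = Max (range (\<lambda>\<Gamma>. card (\<iota> \<Gamma>)))"

text \<open>The fixed choice of greedy transitions g_r: gs X Y r B is the r-successor board
chosen in the greedy transition from B; g_r B = thin_board (gs X Y r B).\<close>
definition greedy_choice_ok :: "'a::{finite,semilattice_sup,order_bot} \<Rightarrow> nat \<Rightarrow> ('s \<Rightarrow> 'x set)
     \<Rightarrow> ('r \<Rightarrow> 's) \<Rightarrow> ('r \<Rightarrow> 's list) \<Rightarrow> ('r \<Rightarrow> nat \<Rightarrow> ('x \<times> 'a \<times> 'x) set)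
     \<Rightarrow> ('x set \<Rightarrow> 'x set \<Rightarrow> ('x \<times> 'a \<times> 'x) set \<Rightarrow> ('x,'a) board \<Rightarrow> ('x,'a) board) \<Rightarrow> bool" where
  "greedy_choice_ok \<alpha> K \<iota> cncl prms tr gs \<longleftrightarrow>
    (\<forall>R i B. i < length (prms R) \<longrightarrow> sparse \<alpha> K (\<iota> (cncl R)) B \<longrightarrow>
      (let X = \<iota> (cncl R); Y = \<iota> (prms R ! i); r = tr R i;
           k = length (cov_list B); Bp = greedy_pre X B; Bs = gs X Y r B; B' = thin_board Bs
       in successor \<alpha> r Bp Bs \<and> sparse \<alpha> K Y B'
          \<and> set (fst B') \<inter> set (fst B)
              = \<Inter> ((\<lambda>C. set (fst C)) ` ({reset_stage B j | j. j \<le> k} \<union> {Bp, Bs, B'}))))"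

record ('q,'k) preproof =
  nodes :: "nat list set"
  bud :: "nat list \<Rightarrow> nat list option"
  lbl :: "nat list \<Rightarrow> 'q"
  rul :: "nat list \<Rightarrow> 'k option"

definition is_preproof :: "('q \<Rightarrow> bool) \<Rightarrow> ('q \<Rightarrow> 'k \<Rightarrow> 'q list \<Rightarrow> bool) \<Rightarrow> ('q,'k) preproof \<Rightarrow> bool" where
  "is_preproof sq ok P \<longleftrightarrow> finite (nodes P) \<and> [] \<in> nodes P
    \<and> (\<forall>t\<in>nodes P. \<forall>s. prefix s t \<longrightarrow> s \<in> nodes P)
    \<and> (\<forall>t\<in>nodes P. sq (lbl P t))
    \<and> (\<forall>t\<in>nodes P. case rul P t of
          None \<Rightarrow> (\<forall>j. t @ [j] \<notin> nodes P)
        | Some k \<Rightarrow> (\<exists>n. (\<forall>j. t @ [j] \<in> nodes P \<longleftrightarrow> j < n)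
                        \<and> ok (lbl P t) k (map (\<lambda>j. lbl P (t @ [j])) [0..<n])))
    \<and> (\<forall>t c. bud P t = Some c \<longrightarrow> t \<in> nodes P \<and> rul P t = None \<and> strict_prefix c t
              \<and> (\<exists>j. c @ [j] \<in> nodes P) \<and> lbl P c = lbl P t)"

definition assumption_free :: "('q,'k) preproof \<Rightarrow> bool" where
  "assumption_free P \<longleftrightarrow> (\<forall>t\<in>nodes P. rul P t = None \<longrightarrow> bud P t \<noteq> None)"

definition inf_path :: "('q,'k) preproof \<Rightarrow> (nat \<Rightarrow> nat list) \<Rightarrow> bool" where
  "inf_path P p \<longleftrightarrow> p 0 = [] \<and>
     (\<forall>i. p i \<in> nodes P \<and> ((\<exists>j. p (Suc i) = p i @ [j]) \<or> bud P (p i) = Some (p (Suc i))))"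

definition S_seq :: "'a::finite \<Rightarrow> nat \<Rightarrow> ('s \<Rightarrow> 'x set) \<Rightarrow> 's \<times> ('x,'a) board \<Rightarrow> bool" where
  "S_seq \<alpha> K \<iota> q = sparse \<alpha> K (\<iota> (fst q)) (snd q)"

definition S_ok :: "'a::finite \<Rightarrow> nat \<Rightarrow> ('s \<Rightarrow> 'x set) \<Rightarrow> ('r \<Rightarrow> 's) \<Rightarrow> ('r \<Rightarrow> 's list)
     \<Rightarrow> ('r \<Rightarrow> nat \<Rightarrow> ('x \<times> 'a \<times> 'x) set)
     \<Rightarrow> ('x set \<Rightarrow> 'x set \<Rightarrow> ('x \<times> 'a \<times> 'x) set \<Rightarrow> ('x,'a) board \<Rightarrow> ('x,'a) board)
     \<Rightarrow> 's \<times> ('x,'a) board \<Rightarrow> 'r \<times> ('x,'a) board \<Rightarrow> ('s \<times> ('x,'a) board) list \<Rightarrow> bool" where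
  "S_ok \<alpha> K \<iota> cncl prms tr gs q k ps \<longleftrightarrow>
     fst q = cncl (fst k) \<and> snd q = snd k \<and> sparse \<alpha> K (\<iota> (fst q)) (snd k)
     \<and> ps = map (\<lambda>i. (prms (fst k) ! i,
                       thin_board (gs (\<iota> (cncl (fst k))) (\<iota> (prms (fst k) ! i)) (tr (fst k) i) (snd k))))
               [0..<length (prms (fst k))]"

definition S_proof :: "'a::finite \<Rightarrow> nat \<Rightarrow> ('s \<Rightarrow> 'x set) \<Rightarrow> ('r \<Rightarrow> 's) \<Rightarrow> ('r \<Rightarrow> 's list)
     \<Rightarrow> ('r \<Rightarrow> nat \<Rightarrow> ('x \<times> 'a \<times> 'x) set)
     \<Rightarrow> ('x set \<Rightarrow> 'x set \<Rightarrow> ('x \<times> 'a \<times> 'x) set \<Rightarrow> ('x,'a) board \<Rightarrow> ('x,'a) board)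
     \<Rightarrow> ('s \<times> ('x,'a) board, 'r \<times> ('x,'a) board) preproof \<Rightarrow> bool" where
  "S_proof \<alpha> K \<iota> cncl prms tr gs P \<longleftrightarrow>
     is_preproof (S_seq \<alpha> K \<iota>) (S_ok \<alpha> K \<iota> cncl prms tr gs) P \<and> assumption_free P
     \<and> (\<forall>p. inf_path P p \<longrightarrow>
          (\<exists>N \<gamma>. (\<forall>i\<ge>N. \<gamma> \<in> set (fst (snd (lbl P (p i)))))
                 \<and> infinite {i. covered (snd (lbl P (p i))) \<gamma>}))"

datatype 'r rkind = RWeak | RReset nat | RPop | RRule 'r

definition R_seq :: "('s \<Rightarrow> 'x set) \<Rightarrow> 's \<times> ('x,'a) board \<Rightarrow> bool" where
  "R_seq \<iota> q = board_on (\<iota> (fst q)) (snd q)"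

definition R_ok :: "'a::{semilattice_sup,order_bot} \<Rightarrow> ('s \<Rightarrow> 'x set) \<Rightarrow> ('r \<Rightarrow> 's) \<Rightarrow> ('r \<Rightarrow> 's list)
     \<Rightarrow> ('r \<Rightarrow> nat \<Rightarrow> ('x \<times> 'a \<times> 'x) set)
     \<Rightarrow> 's \<times> ('x,'a) board \<Rightarrow> 'r rkind \<Rightarrow> ('s \<times> ('x,'a) board) list \<Rightarrow> bool" where
  "R_ok \<alpha> \<iota> cncl prms tr q k ps \<longleftrightarrow> (case k of
      RWeak \<Rightarrow> (\<exists>B'. ps = [(fst q, B')] \<and> weakening (snd q) B')
    | RReset \<gamma> \<Rightarrow> covered (snd q) \<gamma> \<and> ps = [(fst q, reset_board \<gamma> (snd q))]
    | RPop \<Rightarrow> (\<exists>P. P \<subseteq> \<iota> (fst q) \<and> ps = [(fst q, pop_board P (snd q))])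
    | RRule R \<Rightarrow> fst q = cncl R \<and> length ps = length (prms R)
        \<and> (\<forall>i<length ps. fst (ps ! i) = prms R ! i \<and> successor \<alpha> (tr R i) (snd q) (snd (ps ! i))))"

text \<open>Invariant condition: theta a nonempty prefix of the longest common prefix of the
controls on the path from the companion to the bud (equivalently: a common prefix of all
those controls), with Reset_{max theta} applied on that path.\<close>
definition R_proof :: "'a::{semilattice_sup,order_bot} \<Rightarrow> ('s \<Rightarrow> 'x set) \<Rightarrow> ('r \<Rightarrow> 's) \<Rightarrow> ('r \<Rightarrow> 's list)
     \<Rightarrow> ('r \<Rightarrow> nat \<Rightarrow> ('x \<times> 'a \<times> 'x) set)
     \<Rightarrow> ('s \<times> ('x,'a) board, 'r rkind) preproof \<Rightarrow> bool" where
  "R_proof \<alpha> \<iota> cncl prms tr P \<longleftrightarrow>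
     is_preproof (R_seq \<iota>) (R_ok \<alpha> \<iota> cncl prms tr) P \<and> assumption_free P
     \<and> (\<forall>t c. bud P t = Some c \<longrightarrow>
          (\<exists>\<theta>. \<theta> \<noteq> [] \<and> (\<forall>s. prefix c s \<and> prefix s t \<longrightarrow> prefix \<theta> (fst (snd (lbl P s))))
               \<and> (\<exists>s. prefix c s \<and> prefix s t \<and> rul P s = Some (RReset (last \<theta>)))))"

fun phi_aux :: "(nat list \<Rightarrow> nat) \<Rightarrow> nat list \<Rightarrow> nat list \<Rightarrow> nat list" where
  "phi_aux c p [] = []"
| "phi_aux c p (i # rest) = replicate (Suc (c p)) 0 @ [i, 0] @ phi_aux c (p @ [i]) rest"

definition cov_count :: "('q, 'r \<times> ('x,'a) board) preproof \<Rightarrow> nat list \<Rightarrow> nat" where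
  "cov_count P t = (case rul P t of Some k \<Rightarrow> length (cov_list (snd k)) | None \<Rightarrow> 0)"

text \<open>Address in expand(P) of the node corresponding to node t of P.\<close>
definition phi :: "('q, 'r \<times> ('x,'a) board) preproof \<Rightarrow> nat list \<Rightarrow> nat list" where
  "phi P t = phi_aux (cov_count P) [] t"

definition exp_entries :: "('s \<Rightarrow> 'x set) \<Rightarrow> ('r \<Rightarrow> 's) \<Rightarrow> ('r \<Rightarrow> 's list)
     \<Rightarrow> ('r \<Rightarrow> nat \<Rightarrow> ('x \<times> 'a \<times> 'x) set)
     \<Rightarrow> ('x set \<Rightarrow> 'x set \<Rightarrow> ('x \<times> 'a \<times> 'x) set \<Rightarrow> ('x,'a::bot) board \<Rightarrow> ('x,'a) board)
     \<Rightarrow> ('s \<times> ('x,'a) board, 'r \<times> ('x,'a) board) preproof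
     \<Rightarrow> (nat list \<times> ('s \<times> ('x,'a) board) \<times> 'r rkind option) set" where
  "exp_entries \<iota> cncl prms tr gs P =
     {(phi P t, lbl P t, None) | t. t \<in> nodes P \<and> rul P t = None}
   \<union> {(phi P t @ replicate j 0, (cncl R, reset_stage B j), Some (RReset (rev (cov_list B) ! j)))
       | t R B j. t \<in> nodes P \<and> rul P t = Some (R, B) \<and> j < length (cov_list B)}
   \<union> {(phi P t @ replicate (length (cov_list B)) 0,
        (cncl R, reset_stage B (length (cov_list B))), Some RPop)
       | t R B. t \<in> nodes P \<and> rul P t = Some (R, B)}
   \<union> {(phi P t @ replicate (Suc (length (cov_list B))) 0,
        (cncl R, greedy_pre (\<iota> (cncl R)) B), Some (RRule R))
       | t R B. t \<in> nodes P \<and> rul P t = Some (R, B)}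
   \<union> {(phi P t @ replicate (Suc (length (cov_list B))) 0 @ [i],
        (prms R ! i, gs (\<iota> (cncl R)) (\<iota> (prms R ! i)) (tr R i) B), Some RWeak)
       | t R B i. t \<in> nodes P \<and> rul P t = Some (R, B) \<and> i < length (prms R)}"

definition expand :: "('s \<Rightarrow> 'x set) \<Rightarrow> ('r \<Rightarrow> 's) \<Rightarrow> ('r \<Rightarrow> 's list)
     \<Rightarrow> ('r \<Rightarrow> nat \<Rightarrow> ('x \<times> 'a \<times> 'x) set)
     \<Rightarrow> ('x set \<Rightarrow> 'x set \<Rightarrow> ('x \<times> 'a \<times> 'x) set \<Rightarrow> ('x,'a::bot) board \<Rightarrow> ('x,'a) board)
     \<Rightarrow> ('s \<times> ('x,'a) board, 'r \<times> ('x,'a) board) preproof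
     \<Rightarrow> ('s \<times> ('x,'a) board, 'r rkind) preproof" where
  "expand \<iota> cncl prms tr gs P =
     (let E = exp_entries \<iota> cncl prms tr gs P in
      \<lparr> nodes = fst ` E,
        bud = (\<lambda>s. if \<exists>t\<in>nodes P. phi P t = s \<and> bud P t \<noteq> None
                   then Some (phi P (the (bud P (SOME t. t \<in> nodes P \<and> phi P t = s \<and> bud P t \<noteq> None))))
                   else None),
        lbl = (\<lambda>s. fst (snd (SOME e. e \<in> E \<and> fst e = s))),
        rul = (\<lambda>s. snd (snd (SOME e. e \<in> E \<and> fst e = s))) \<rparr>)"

end

theory Submission
  imports Defs "HOL-Library.Infinite_Set"
begin

text \<open>
  The local rules of the expansion are sound because a greedy transition is literally a
  sequence of resets, a population, a successor and a thinning (a weakening); a reset is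
  legal at its stage because resets proceed from the largest covered chip downwards and
  therefore never uncover or remove a chip that is still to be reset.

  The global condition is the real content. Running forever around the cycle of a bud of the
  S-proof gives an infinite path, so some chip \<open>\<gamma>\<close> stays on the whole cycle and is covered
  at some node of it; the expansion of that node resets \<open>\<gamma>\<close>. Every control step only filters
  the old chips and appends fresh ones on top, so a chip below \<open>\<gamma>\<close> that was lost on the
  cycle would come back above \<open>\<gamma>\<close>, and the cycle could not close. Hence the chips up to
  \<open>\<gamma>\<close> form a common prefix \<open>\<theta>\<close> of all controls on the cycle, and also of the
  intermediate controls inside the expanded nodes, because the chosen greedy transitions keep
  every chip that survives them in all intermediate boards. This \<open>\<theta>\<close>, ending in \<open>\<gamma>\<close>, is
  an invariant of the expanded bud.
\<close>

lemma chip_le_iff: "chip_le \<Theta> a b \<longleftrightarrow> (\<exists>u v. \<Theta> = u @ b # v \<and> (a \<in> set u \<or> a = b))"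
proof
  assume "chip_le \<Theta> a b"
  then obtain i j where ij: "i \<le> j" "j < length \<Theta>" "\<Theta> ! i = a" "\<Theta> ! j = b"
    unfolding chip_le_def by blast
  have "\<Theta> = take j \<Theta> @ b # drop (Suc j) \<Theta>"
    using ij id_take_nth_drop by metis
  moreover have "a \<in> set (take j \<Theta>) \<or> a = b"
    using ij by (cases "i = j") (auto simp: in_set_conv_nth intro!: exI[of _ i])
  ultimately show "\<exists>u v. \<Theta> = u @ b # v \<and> (a \<in> set u \<or> a = b)" by blast
next
  assume "\<exists>u v. \<Theta> = u @ b # v \<and> (a \<in> set u \<or> a = b)"
  then obtain u v where uv: "\<Theta> = u @ b # v" "a \<in> set u \<or> a = b" by blast
  show "chip_le \<Theta> a b"
  proof (cases "a = b")
    case True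
    then show ?thesis unfolding chip_le_def using uv
      by (intro exI[of _ "length u"]) auto
  next
    case False
    then obtain i where "i < length u" "u ! i = a" using uv by (auto simp: in_set_conv_nth)
    then show ?thesis unfolding chip_le_def using uv
      by (intro exI[of _ i] exI[of _ "length u"]) (auto simp: nth_append)
  qed
qed

lemma filter_eq_append_Cons_D:
  "filter Q xs = u @ b # v \<Longrightarrow> \<exists>u' v'. xs = u' @ b # v' \<and> set u \<subseteq> set u' \<and> v = filter Q v'"
proof (induction xs arbitrary: u)
  case (Cons x xs)
  show ?case
  proof (cases "Q x \<and> u \<noteq> []")
    case True
    then obtain u'' where u: "u = x # u''" and "filter Q xs = u'' @ b # v"
      using Cons.prems by (cases u) auto
    with Cons.IH show ?thesis by (metis append_Cons set_subset_Cons subset_trans insert_mono list.set(2))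
  next
    case False
    show ?thesis
    proof (cases "Q x")
      case True
      with False Cons.prems show ?thesis by (intro exI[of _ "[]"] exI[of _ xs]) auto
    next
      case False
      with Cons.prems Cons.IH show ?thesis by (metis append_Cons filter.simps(2) set_subset_Cons subset_trans)
    qed
  qed
qed simp

lemma chip_le_filterI: "chip_le \<Theta> a b \<Longrightarrow> Q a \<Longrightarrow> Q b \<Longrightarrow> chip_le (filter Q \<Theta>) a b"
  unfolding chip_le_iff by (fastforce intro: exI[of _ "filter Q u" for u])

lemma chip_le_filterD: "chip_le (filter Q \<Theta>) a b \<Longrightarrow> chip_le \<Theta> a b"
  unfolding chip_le_iff by (metis filter_eq_append_Cons_D subsetD)

lemma chip_le_refl: "a \<in> set \<Theta> \<Longrightarrow> chip_le \<Theta> a a"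
  unfolding chip_le_def by (auto simp: in_set_conv_nth)

lemma chip_le_antisym: "distinct \<Theta> \<Longrightarrow> chip_le \<Theta> a b \<Longrightarrow> chip_le \<Theta> b a \<Longrightarrow> a = b"
  unfolding chip_le_def by (metis le_antisym le_less_trans less_or_eq_imp_le nth_eq_iff_index_eq)

section \<open>Control steps\<close>

definition ctrl_step :: "nat list \<Rightarrow> nat list \<Rightarrow> bool" where
  "ctrl_step C C' \<longleftrightarrow> (\<exists>Q ns. C' = filter Q C @ ns \<and> set ns \<inter> set C = {})"

lemma ctrl_step_filter: "ctrl_step C (filter Q C)"
  unfolding ctrl_step_def by (intro exI[of _ Q] exI[of _ "[]"]) auto

lemma ctrl_step_prefix:
  assumes "ctrl_step C C'" "prefix \<theta> C" "set \<theta> \<subseteq> set C'"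
  shows "prefix \<theta> C'"
proof -
  obtain Q ns where C': "C' = filter Q C @ ns" "set ns \<inter> set C = {}"
    using assms(1) unfolding ctrl_step_def by blast
  obtain r where C: "C = \<theta> @ r" using assms(2) prefixE by metis
  have "\<forall>z\<in>set \<theta>. Q z" using assms(3) C C' by auto
  then have "filter Q \<theta> = \<theta>" by (simp add: filter_id_conv)
  then show ?thesis using C C' by simp
qed

lemma ctrl_steps_new_chip_above:
  assumes "\<forall>j. a \<le> j \<and> j < b \<longrightarrow> ctrl_step (C j) (C (Suc j))"
    and "\<forall>j. a \<le> j \<and> j \<le> b \<longrightarrow> \<gamma> \<in> set (C j)" and "\<delta> \<notin> set (C a)" "\<delta> \<in> set (C b)" "a \<le> b"
  shows "\<exists>u v. C b = u @ \<gamma> # v \<and> \<delta> \<in> set v"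
  using assms
proof (induction b)
  case (Suc b)
  show ?case
  proof (cases "a = Suc b")
    case False
    then have ab: "a \<le> b" using Suc.prems by simp
    obtain Q ns where st: "C (Suc b) = filter Q (C b) @ ns" "set ns \<inter> set (C b) = {}"
      using Suc.prems(1) ab unfolding ctrl_step_def by auto
    have "\<gamma> \<in> set (C b)" "\<gamma> \<in> set (C (Suc b))" using Suc.prems(2) ab by auto
    then have Q\<gamma>: "\<gamma> \<in> set (filter Q (C b))" using st by auto
    show ?thesis
    proof (cases "\<delta> \<in> set (C b)")
      case True
      then obtain u v where uv: "C b = u @ \<gamma> # v" "\<delta> \<in> set v" using Suc.IH Suc.prems ab by auto
      have "Q \<delta>" "Q \<gamma>" using True Suc.prems(4) st Q\<gamma> by auto
      then show ?thesis using uv st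
        by (intro exI[of _ "filter Q u"] exI[of _ "filter Q v @ ns"]) auto
    next
      case False
      then have "\<delta> \<in> set ns" using Suc.prems(4) st by auto
      obtain u v where "filter Q (C b) = u @ \<gamma> # v" using Q\<gamma> split_list by metis
      then show ?thesis using st \<open>\<delta> \<in> set ns\<close>
        by (intro exI[of _ u] exI[of _ "v @ ns"]) auto
    qed
  qed (use Suc.prems in simp)
qed simp

text \<open>A chip below \<open>\<gamma>\<close> that got lost could only re-enter above \<open>\<gamma>\<close>, so the cycle
  could not close.\<close>
lemma ctrl_cycle_keeps_lower:
  assumes "\<forall>j<n. ctrl_step (C j) (C (Suc j))" "C n = C 0" "\<forall>j\<le>n. \<gamma> \<in> set (C j)"
    and "distinct (C 0)" "C 0 = u @ \<gamma> # v" "\<delta> \<in> set u" "j \<le> n"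
  shows "\<delta> \<in> set (C j)"
proof (rule ccontr)
  assume "\<delta> \<notin> set (C j)"
  moreover have "\<delta> \<in> set (C n)" using assms by simp
  ultimately obtain u' v' where uv': "C n = u' @ \<gamma> # v'" "\<delta> \<in> set v'"
    using ctrl_steps_new_chip_above[of j n C \<gamma> \<delta>] assms by auto
  have le1: "chip_le (C 0) \<delta> \<gamma>" unfolding chip_le_iff using assms by blast
  obtain v1 v2 where "v' = v1 @ \<delta> # v2" using uv'(2) split_list by metis
  then have "C 0 = (u' @ \<gamma> # v1) @ \<delta> # v2" using uv' assms by simp
  then have le2: "chip_le (C 0) \<gamma> \<delta>" unfolding chip_le_iff by fastforce
  have "\<delta> = \<gamma>" using chip_le_antisym[OF assms(4) le1 le2] .
  then show False using assms(4,5,6) by auto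
qed

lemma ctrl_cycle_common_prefix:
  assumes steps: "\<forall>j<n. ctrl_step (C j) (C (Suc j))" and cyc: "C n = C 0"
    and \<gamma>: "\<forall>j\<le>n. \<gamma> \<in> set (C j)" and dist: "distinct (C 0)"
  obtains \<theta> where "\<theta> \<noteq> []" "last \<theta> = \<gamma>" "\<forall>j\<le>n. prefix \<theta> (C j)"
proof -
  have "\<gamma> \<in> set (C 0)" using \<gamma> by simp
  then obtain u v where uv: "C 0 = u @ \<gamma> # v" by (meson split_list)
  let ?\<theta> = "u @ [\<gamma>]"
  have sub: "set ?\<theta> \<subseteq> set (C j)" if j: "j \<le> n" for j
  proof
    fix \<delta> assume "\<delta> \<in> set ?\<theta>"
    then consider "\<delta> \<in> set u" | "\<delta> = \<gamma>" by auto
    then show "\<delta> \<in> set (C j)"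
      by cases (use ctrl_cycle_keeps_lower[OF steps cyc \<gamma> dist uv _ j] \<gamma> j in blast)+
  qed
  have "prefix ?\<theta> (C j)" if "j \<le> n" for j
    using that
  proof (induction j)
    case 0 then show ?case unfolding uv by simp
  next
    case (Suc j)
    then have "prefix ?\<theta> (C j)" "ctrl_step (C j) (C (Suc j))" using steps by simp_all
    then show ?case using ctrl_step_prefix sub[OF Suc.prems] by blast
  qed
  then show ?thesis by (intro that[of ?\<theta>]) simp_all
qed

lemma ctrl_steps_compose:
  assumes "\<forall>j<n. ctrl_step (C j) (C (Suc j))" "\<forall>j\<le>n. set (C 0) \<inter> set (C n) \<subseteq> set (C j)"
  shows "ctrl_step (C 0) (C n)"
proof -
  let ?D = "set (C 0) \<inter> set (C n)"
  have "\<exists>Q ns. C m = filter Q (C 0) @ ns \<and> set ns \<inter> ?D = {}" if "m \<le> n" for m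
    using that
  proof (induction m)
    case 0 then show ?case by (intro exI[of _ "\<lambda>_. True"] exI[of _ "[]"]) auto
  next
    case (Suc m)
    then obtain Q ns where IH: "C m = filter Q (C 0) @ ns" "set ns \<inter> ?D = {}" by auto
    obtain Q' ns' where st: "C (Suc m) = filter Q' (C m) @ ns'" "set ns' \<inter> set (C m) = {}"
      using assms(1) Suc.prems unfolding ctrl_step_def by (meson Suc_le_lessD)
    have "?D \<subseteq> set (C m)" using assms(2) Suc.prems by simp
    then have "set ns' \<inter> ?D = {}" using st by auto
    then show ?case using IH st
      by (intro exI[of _ "\<lambda>z. Q z \<and> Q' z"] exI[of _ "filter Q' ns @ ns'"]) (auto simp: filter_filter)
  qed
  then obtain Q ns where "C n = filter Q (C 0) @ ns" "set ns \<inter> ?D = {}" by blast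
  moreover from this have "set ns \<inter> set (C 0) = {}" by auto
  ultimately show ?thesis unfolding ctrl_step_def by blast
qed

lemma mem_chips_iff: "z \<in> chips \<sigma> \<longleftrightarrow> (\<exists>x a S. S \<in> \<sigma> x a \<and> z \<in> S)"
  unfolding chips_def by blast

lemma set_restrict_ctrl: "set (restrict_ctrl \<Theta> \<sigma>) = set \<Theta> \<inter> chips \<sigma>"
  unfolding restrict_ctrl_def by auto

lemma board_on_chips_subset: "board_on X B \<Longrightarrow> chips (snd B) \<subseteq> set (fst B)"
  unfolding board_on_def chips_def by blast

lemma snd_reset_board:
  "snd (reset_board \<gamma> B) x a = (\<lambda>S. if \<gamma> \<in> S then {z\<in>S. chip_le (fst B) z \<gamma>} else S) ` snd B x a"
  unfolding reset_board_def Let_def by simp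

lemma fst_reset_board: "fst (reset_board \<gamma> B) = filter (\<lambda>z. z \<in> chips (snd (reset_board \<gamma> B))) (fst B)"
  unfolding reset_board_def Let_def restrict_ctrl_def by simp

lemma ctrl_step_reset_board: "ctrl_step (fst B) (fst (reset_board \<gamma> B))"
  unfolding fst_reset_board by (rule ctrl_step_filter)

lemma board_on_reset_board:
  assumes "board_on X B" shows "board_on X (reset_board \<gamma> B)"
proof -
  have old: "S \<subseteq> set (fst B)" if S: "S \<in> snd (reset_board \<gamma> B) x a" for S x a
  proof -
    obtain S0 where "S0 \<in> snd B x a" "S \<subseteq> S0"
      using S unfolding snd_reset_board by (auto split: if_splits)
    then show ?thesis using assms unfolding board_on_def by blast
  qed
  have "S \<subseteq> set (fst (reset_board \<gamma> B))" if "S \<in> snd (reset_board \<gamma> B) x a" for S x a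
    using old[OF that] that unfolding fst_reset_board mem_chips_iff by auto
  moreover have "snd (reset_board \<gamma> B) x a = {}" if "x \<notin> X" for x a
    using assms that unfolding snd_reset_board board_on_def by simp
  moreover have "distinct (fst (reset_board \<gamma> B))"
    using assms unfolding fst_reset_board board_on_def by simp
  ultimately show ?thesis using assms unfolding board_on_def fst_reset_board by auto
qed

lemma fst_thin_board: "fst (thin_board B) = filter (\<lambda>z. z \<in> chips (snd (thin_board B))) (fst B)"
  unfolding thin_board_def Let_def restrict_ctrl_def by simp

lemma ctrl_step_thin_board: "ctrl_step (fst B) (fst (thin_board B))"
  unfolding fst_thin_board by (rule ctrl_step_filter)

lemma weakening_thin_board: "weakening B (thin_board B)"
  unfolding weakening_def by (simp add: thin_board_def Let_def)

lemma fst_pop_board [simp]: "fst (pop_board P B) = fst B"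
  unfolding pop_board_def by simp

lemma board_on_pop_board:
  assumes "board_on X B" "P \<subseteq> X" shows "board_on X (pop_board P B)"
proof -
  have "chips (snd B) \<subseteq> chips (snd (pop_board P B))"
  proof
    fix z assume "z \<in> chips (snd B)"
    then obtain x a S where "S \<in> snd B x a" "z \<in> S" using mem_chips_iff by metis
    then have "S \<in> snd (pop_board P B) x a" unfolding pop_board_def by auto
    then show "z \<in> chips (snd (pop_board P B))" using mem_chips_iff \<open>z \<in> S\<close> by metis
  qed
  then show ?thesis using assms unfolding board_on_def
    by (auto simp: pop_board_def split: if_splits)
qed

definition succ_stacks :: "('x,'a::sup) board \<Rightarrow> ('x \<times> 'a \<times> 'x) set \<Rightarrow> 'x \<Rightarrow> 'a \<Rightarrow> nat set set" where
  "succ_stacks B r y a = {S. \<exists>x b c. S \<in> snd B x b \<and> (x, c, y) \<in> r \<and> a = sup b c}"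

lemma successor_unfold:
  assumes "successor \<alpha> r B B'"
  shows "\<exists>fr ns. inj_on fr {y. succ_stacks B r y \<alpha> \<noteq> {}}
           \<and> fr ` {y. succ_stacks B r y \<alpha> \<noteq> {}} \<inter> set (fst B) = {}
           \<and> snd B' = (\<lambda>y a. if a = \<alpha> then {}
                              else if a = bot then succ_stacks B r y bot \<union> (insert (fr y)) ` succ_stacks B r y \<alpha>
                              else succ_stacks B r y a)
           \<and> distinct ns \<and> set ns = fr ` {y. succ_stacks B r y \<alpha> \<noteq> {}}
           \<and> fst B' = restrict_ctrl (fst B) (snd B') @ ns"
  using assms unfolding successor_def Let_def succ_stacks_def .

lemma ctrl_step_successor:
  assumes "successor \<alpha> r B B'" shows "ctrl_step (fst B) (fst B')"
proof -
  from successor_unfold[OF assms] obtain fr ns where "fr ` {y. succ_stacks B r y \<alpha> \<noteq> {}} \<inter> set (fst B) = {}"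
     "set ns = fr ` {y. succ_stacks B r y \<alpha> \<noteq> {}}"
     "fst B' = restrict_ctrl (fst B) (snd B') @ ns"
    by (elim exE conjE) (rule that, assumption+)
  then show ?thesis unfolding ctrl_step_def restrict_ctrl_def
    by (intro exI[of _ "\<lambda>z. z \<in> chips (snd B')"] exI[of _ ns]) simp
qed

lemma board_on_successor:
  fixes \<alpha> :: "'a::{semilattice_sup,order_bot}"
  assumes "board_on X B" "successor \<alpha> r B B'" "\<forall>x c y. (x,c,y)\<in>r \<longrightarrow> y \<in> Y" "finite Y" "\<alpha> \<noteq> bot"
  shows "board_on Y B'"
proof -
  define \<Theta> where "\<Theta> = fst B"
  define Ya where "Ya = {y. succ_stacks B r y \<alpha> \<noteq> {}}"
  obtain fr ns where fr: "inj_on fr Ya" "fr ` Ya \<inter> set \<Theta> = {}"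
    and \<sigma>': "snd B' = (\<lambda>y a. if a = \<alpha> then {}
                              else if a = bot then succ_stacks B r y bot \<union> (insert (fr y)) ` succ_stacks B r y \<alpha>
                              else succ_stacks B r y a)"
    and ns: "distinct ns" "set ns = fr ` Ya" "fst B' = restrict_ctrl \<Theta> (snd B') @ ns"
    using successor_unfold[OF assms(2)] unfolding \<Theta>_def[symmetric] Ya_def[symmetric]
    by (elim exE conjE) (rule that, assumption+)
  have moved: "S \<subseteq> set \<Theta>" if "S \<in> succ_stacks B r y a" for S y a
    using that assms(1) unfolding succ_stacks_def board_on_def \<Theta>_def by blast
  have stacks: "S \<subseteq> set \<Theta> \<or> (\<exists>y\<in>Ya. \<exists>S0. S = insert (fr y) S0 \<and> S0 \<subseteq> set \<Theta>)"
    if "S \<in> snd B' x a" for S x a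
  proof (cases "a = bot")
    case True
    with that assms(5) have "S \<in> succ_stacks B r x bot \<or> (\<exists>S0 \<in> succ_stacks B r x \<alpha>. S = insert (fr x) S0)"
      unfolding \<sigma>' by auto
    then show ?thesis unfolding Ya_def using moved by blast
  next
    case False
    with that have "S \<in> succ_stacks B r x a" unfolding \<sigma>' by (simp split: if_splits)
    then show ?thesis using moved by blast
  qed
  have "S \<subseteq> set (fst B')" if S: "S \<in> snd B' x a" for S x a
  proof
    fix z assume "z \<in> S"
    then have "z \<in> chips (snd B')" using S mem_chips_iff by metis
    then show "z \<in> set (fst B')"
      using stacks[OF S] \<open>z \<in> S\<close> ns(2,3) by (auto simp: set_restrict_ctrl)
  qed
  moreover have "set (fst B') \<subseteq> chips (snd B')"
  proof
    fix z assume "z \<in> set (fst B')"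
    then consider "z \<in> set (restrict_ctrl \<Theta> (snd B'))" | y where "y \<in> Ya" "z = fr y"
      using ns by auto
    then show "z \<in> chips (snd B')"
    proof cases
      case (2 y)
      then obtain S0 where "S0 \<in> succ_stacks B r y \<alpha>" unfolding Ya_def by auto
      then have "insert (fr y) S0 \<in> snd B' y bot" using \<sigma>' assms(5) by auto
      then show ?thesis using 2 mem_chips_iff by (metis insertI1)
    qed (simp add: set_restrict_ctrl)
  qed
  moreover have "distinct (fst B')"
    using ns fr assms(1) unfolding restrict_ctrl_def board_on_def \<Theta>_def by (auto simp: set_restrict_ctrl)
  moreover have "snd B' x a = {}" if "x \<notin> Y" for x a
    using that assms(3) unfolding \<sigma>' succ_stacks_def by auto
  ultimately show ?thesis unfolding board_on_def using assms(4) by blast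
qed

section \<open>Greedy transitions\<close>

lemma reset_stage_0 [simp]: "reset_stage B 0 = B"
  unfolding reset_stage_def by simp

lemma reset_stage_Suc:
  "j < length (cov_list B) \<Longrightarrow> reset_stage B (Suc j) = reset_board (rev (cov_list B) ! j) (reset_stage B j)"
  unfolding reset_stage_def by (simp add: take_Suc_conv_app_nth)

lemma board_on_fold_reset_board: "board_on X B \<Longrightarrow> board_on X (fold reset_board \<gamma>s B)"
  by (induction \<gamma>s arbitrary: B) (simp_all add: board_on_reset_board)

lemma board_on_reset_stage: "board_on X B \<Longrightarrow> board_on X (reset_stage B j)"
  unfolding reset_stage_def by (rule board_on_fold_reset_board)

lemma fold_reset_board_ctrl_filter: "\<exists>Q. fst (fold reset_board \<gamma>s B) = filter Q (fst B)"
proof (induction \<gamma>s arbitrary: B)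
  case (Cons \<gamma> \<gamma>s)
  then obtain Q where "fst (fold reset_board \<gamma>s (reset_board \<gamma> B)) = filter Q (fst (reset_board \<gamma> B))"
    by blast
  then show ?case by (auto simp: fst_reset_board filter_filter)
qed (auto intro: exI[of _ "\<lambda>_. True"])

lemma reset_stage_ctrl_filter: "\<exists>Q. fst (reset_stage B j) = filter Q (fst B)"
  unfolding reset_stage_def by (rule fold_reset_board_ctrl_filter)

lemma rev_cov_list_order:
  assumes "distinct (fst B)" "j < i" "i < length (cov_list B)"
  shows "chip_le (fst B) (rev (cov_list B) ! i) (rev (cov_list B) ! j)"
proof -
  let ?c = "cov_list B" let ?k = "length (cov_list B)"
  have "rev ?c ! i = ?c ! (?k - Suc i)" "rev ?c ! j = ?c ! (?k - Suc j)"
    using assms by (auto simp: rev_nth)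
  moreover have "chip_le ?c (?c ! (?k - Suc i)) (?c ! (?k - Suc j))"
    unfolding chip_le_def using assms by (intro exI[of _ "?k - Suc i"] exI[of _ "?k - Suc j"]) auto
  ultimately show ?thesis unfolding cov_list_def by (metis chip_le_filterD)
qed

text \<open>Resets proceed from the largest covered chip downwards, so a reset never removes a
  covered chip that is still to be reset.\<close>
lemma reset_stage_keeps_pending:
  assumes B: "board_on X B" and "j \<le> i" "i < length (cov_list B)"
  shows "rev (cov_list B) ! i \<in> chips (snd (reset_stage B j))"
  using assms(2,3)
proof (induction j arbitrary: i)
  case 0
  have "rev (cov_list B) ! i \<in> set (fst B)" using 0 unfolding cov_list_def
    by (metis filter_is_subset length_rev nth_mem set_rev subsetD)
  then show ?case using B unfolding board_on_def by auto
next
  case (Suc j)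
  let ?\<gamma>s = "rev (cov_list B)" let ?Bj = "reset_stage B j"
  have j: "j < length (cov_list B)" using Suc.prems by simp
  obtain Q where Q: "fst ?Bj = filter Q (fst B)" using reset_stage_ctrl_filter by blast
  have Bj: "board_on X ?Bj" using board_on_reset_stage[OF B] .
  have in_Bj: "?\<gamma>s ! l \<in> set (fst ?Bj)" if "j \<le> l" "l < length (cov_list B)" for l
    using Suc.IH[OF that] board_on_chips_subset[OF Bj] by auto
  obtain x a S0 where S0: "S0 \<in> snd ?Bj x a" "?\<gamma>s ! i \<in> S0"
    using Suc.IH[of i] Suc.prems unfolding mem_chips_iff by auto
  have "chip_le (fst B) (?\<gamma>s ! i) (?\<gamma>s ! j)"
    using rev_cov_list_order[of B j i] Suc.prems B unfolding board_on_def by simp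
  then have "chip_le (fst ?Bj) (?\<gamma>s ! i) (?\<gamma>s ! j)"
    using in_Bj[of i] in_Bj[of j] Suc.prems j unfolding Q by (auto intro: chip_le_filterI)
  then have "?\<gamma>s ! i \<in> (if ?\<gamma>s ! j \<in> S0 then {z\<in>S0. chip_le (fst ?Bj) z (?\<gamma>s ! j)} else S0)"
    using S0 by simp
  then show ?case
    using S0 unfolding reset_stage_Suc[OF j] mem_chips_iff snd_reset_board by blast
qed

lemma reset_stage_stacks:
  assumes B: "board_on X B" and "j \<le> length (cov_list B)" and S: "S \<in> snd (reset_stage B j) x a"
  shows "S \<in> snd B x a \<or> (\<exists>i<j. is_max_of (fst B) (rev (cov_list B) ! i) S)"
  using assms(2,3)
proof (induction j arbitrary: S)
  case (Suc j)
  let ?\<gamma> = "rev (cov_list B) ! j" let ?Bj = "reset_stage B j"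
  have j: "j < length (cov_list B)" using Suc.prems by simp
  obtain Q where Q: "fst ?Bj = filter Q (fst B)" using reset_stage_ctrl_filter by blast
  obtain S0 where S0: "S0 \<in> snd ?Bj x a"
    and S: "S = (if ?\<gamma> \<in> S0 then {z\<in>S0. chip_le (fst ?Bj) z ?\<gamma>} else S0)"
    using Suc.prems(2) unfolding reset_stage_Suc[OF j] snd_reset_board by blast
  show ?case
  proof (cases "?\<gamma> \<in> S0")
    case True
    have "?\<gamma> \<in> set (fst ?Bj)"
      using reset_stage_keeps_pending[OF B order.refl j] board_on_chips_subset[OF board_on_reset_stage[OF B]]
      by blast
    then have "is_max_of (fst B) ?\<gamma> S"
      using True chip_le_refl unfolding S is_max_of_def Q by (auto intro: chip_le_filterD)
    then show ?thesis by blast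
  next
    case False
    then show ?thesis using Suc.IH[of S0] S0 j unfolding S by (auto intro: less_SucI)
  qed
qed simp

lemma reset_stage_covered:
  assumes B: "board_on X B" and j: "j < length (cov_list B)"
  shows "covered (reset_stage B j) (rev (cov_list B) ! j)"
proof -
  let ?\<gamma>s = "rev (cov_list B)" let ?Bj = "reset_stage B j" let ?\<gamma> = "?\<gamma>s ! j"
  obtain Q where Q: "fst ?Bj = filter Q (fst B)" using reset_stage_ctrl_filter by blast
  have dist: "distinct (fst B)" using B unfolding board_on_def by auto
  have "?\<gamma> \<in> set (cov_list B)" using j by (metis length_rev nth_mem set_rev)
  then have cov: "covered B ?\<gamma>" unfolding cov_list_def by simp
  have "\<not> is_max_of (fst ?Bj) ?\<gamma> S" if S: "S \<in> snd ?Bj x a" for x a S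
  proof
    assume "is_max_of (fst ?Bj) ?\<gamma> S"
    then have max: "is_max_of (fst B) ?\<gamma> S"
      unfolding is_max_of_def Q by (auto intro: chip_le_filterD)
    from reset_stage_stacks[OF B _ S] j
    have "S \<in> snd B x a \<or> (\<exists>i<j. is_max_of (fst B) (?\<gamma>s ! i) S)" by simp
    then show False
    proof
      assume "S \<in> snd B x a" then show False using cov max unfolding covered_def by blast
    next
      assume "\<exists>i<j. is_max_of (fst B) (?\<gamma>s ! i) S"
      then obtain i where i: "i < j" "is_max_of (fst B) (?\<gamma>s ! i) S" by blast
      then have "?\<gamma>s ! i = ?\<gamma>"
        using max chip_le_antisym[OF dist] unfolding is_max_of_def by blast
      moreover have "distinct ?\<gamma>s" using dist unfolding cov_list_def by simp
      ultimately show False using i j by (simp add: nth_eq_iff_index_eq)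
    qed
  qed
  moreover have "?\<gamma> \<in> set (fst ?Bj)"
    using reset_stage_keeps_pending[OF B order.refl j] board_on_chips_subset[OF board_on_reset_stage[OF B]]
    by blast
  ultimately show ?thesis unfolding covered_def by blast
qed

lemma board_on_greedy_pre: "board_on X B \<Longrightarrow> board_on X (greedy_pre X B)"
  unfolding greedy_pre_def Let_def
  by (rule board_on_pop_board[OF board_on_reset_stage]) auto

lemma fst_greedy_pre: "fst (greedy_pre X B) = fst (reset_stage B (length (cov_list B)))"
  unfolding greedy_pre_def Let_def by simp

definition greedy_ctrls :: "('x,'a::bot) board \<Rightarrow> ('x,'a) board \<Rightarrow> nat \<Rightarrow> nat list" where
  "greedy_ctrls B Bs j = (if j \<le> length (cov_list B) then fst (reset_stage B j)
     else if j = Suc (length (cov_list B)) then fst Bs else fst (thin_board Bs))"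

context
  fixes \<alpha> :: "'a::{semilattice_sup,order_bot}" and r X and B Bs :: "('x,'a) board"
  assumes succ: "successor \<alpha> r (greedy_pre X B) Bs"
    and persist: "set (fst (thin_board Bs)) \<inter> set (fst B)
      = \<Inter> ((\<lambda>C. set (fst C)) ` ({reset_stage B j | j. j \<le> length (cov_list B)} \<union> {greedy_pre X B, Bs, thin_board Bs}))"
begin

lemma greedy_ctrls_steps: "\<forall>j < Suc (Suc (length (cov_list B))). ctrl_step (greedy_ctrls B Bs j) (greedy_ctrls B Bs (Suc j))"
proof (intro allI impI)
  fix j assume "j < Suc (Suc (length (cov_list B)))"
  then consider "j < length (cov_list B)" | "j = length (cov_list B)" | "j = Suc (length (cov_list B))"
    by linarith
  then show "ctrl_step (greedy_ctrls B Bs j) (greedy_ctrls B Bs (Suc j))"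
    unfolding greedy_ctrls_def
    by cases (simp_all add: reset_stage_Suc ctrl_step_reset_board ctrl_step_thin_board
        ctrl_step_successor[OF succ, unfolded fst_greedy_pre])
qed

lemma greedy_ctrls_persist:
  "j \<le> Suc (Suc (length (cov_list B))) \<Longrightarrow> set (fst (thin_board Bs)) \<inter> set (fst B) \<subseteq> set (greedy_ctrls B Bs j)"
  unfolding persist greedy_ctrls_def by auto

lemma ctrl_step_greedy: "ctrl_step (fst B) (fst (thin_board Bs))"
  using ctrl_steps_compose[of "Suc (Suc (length (cov_list B)))" "greedy_ctrls B Bs"]
    greedy_ctrls_steps greedy_ctrls_persist
  by (simp add: greedy_ctrls_def Int_commute)

lemma prefix_greedy_ctrls:
  assumes "prefix \<theta> (fst B)" "set \<theta> \<subseteq> set (fst (thin_board Bs))"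
  shows "(\<forall>j \<le> length (cov_list B). prefix \<theta> (fst (reset_stage B j)))
    \<and> prefix \<theta> (fst (greedy_pre X B)) \<and> prefix \<theta> (fst Bs)"
proof -
  have "set \<theta> \<subseteq> set (fst B)" using assms(1) by (metis prefixE set_append Un_upper1)
  then have sub: "set \<theta> \<subseteq> set (greedy_ctrls B Bs j)" if "j \<le> Suc (Suc (length (cov_list B)))" for j
    using assms(2) greedy_ctrls_persist[OF that] by blast
  have pre: "prefix \<theta> (greedy_ctrls B Bs j)" if "j \<le> Suc (Suc (length (cov_list B)))" for j
    using that
  proof (induction j)
    case 0 then show ?case using assms(1) by (simp add: greedy_ctrls_def)
  next
    case (Suc j)
    then have "prefix \<theta> (greedy_ctrls B Bs j)" "ctrl_step (greedy_ctrls B Bs j) (greedy_ctrls B Bs (Suc j))"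
      using greedy_ctrls_steps by simp_all
    then show ?case using ctrl_step_prefix sub[OF Suc.prems] by blast
  qed
  have "prefix \<theta> (fst (reset_stage B j))" if "j \<le> length (cov_list B)" for j
    using pre[of j] that by (simp add: greedy_ctrls_def)
  moreover have "prefix \<theta> (fst Bs)"
    using pre[of "Suc (length (cov_list B))"] by (simp add: greedy_ctrls_def)
  ultimately show ?thesis by (simp add: fst_greedy_pre)
qed

end

lemma phi_aux_append: "phi_aux c p (xs @ ys) = phi_aux c p xs @ phi_aux c (p @ xs) ys"
  by (induction xs arbitrary: p) auto

lemma phi_aux_eq_Nil_iff [simp]: "phi_aux c p w = [] \<longleftrightarrow> w = []"
  by (cases w) auto

lemma phi_aux_snoc: "phi_aux c p (w @ [i]) = phi_aux c p w @ replicate (Suc (c (p @ w))) 0 @ [i, 0]"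
  by (simp add: phi_aux_append)

lemma phi_aux_append_inj:
  "phi_aux c p w @ x = phi_aux c p w' @ x' \<Longrightarrow> length x \<le> Suc (c (p@w)) + 1
   \<Longrightarrow> length x' \<le> Suc (c (p@w')) + 1 \<Longrightarrow> w = w' \<and> x = x'"
proof (induction w arbitrary: p w')
  case Nil
  show ?case
  proof (cases w')
    case (Cons i w'')
    have "x = phi_aux c p w' @ x'" using Nil.prems(1) by simp
    then have "length x = length (phi_aux c p w') + length x'" by simp
    moreover have "length (phi_aux c p w') \<ge> Suc (c p) + 2" using Cons by simp
    ultimately show ?thesis using Nil.prems(2) by simp
  qed (use Nil.prems in simp)
next
  case (Cons i w1)
  show ?case
  proof (cases w')
    case Nil
    then have "x' = phi_aux c p (i # w1) @ x" using Cons.prems(1) by simp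
    then have "length x' = length (phi_aux c p (i # w1)) + length x" by simp
    moreover have "length (phi_aux c p (i # w1)) \<ge> Suc (c p) + 2" by simp
    ultimately show ?thesis using Cons.prems(3) Nil by simp
  next
    case (Cons i' w1')
    then have "i = i'" "phi_aux c (p @ [i]) w1 @ x = phi_aux c (p @ [i]) w1' @ x'"
      using Cons.prems(1) by auto
    then show ?thesis using Cons.IH[of "p @ [i]" w1'] Cons.prems Cons by simp
  qed
qed

lemma phi_aux_append_snoc_cases:
  "phi_aux c p w' @ x' = phi_aux c p w @ x @ [j] \<Longrightarrow> length x \<le> Suc (c (p@w)) + 1
   \<Longrightarrow> length x' \<le> Suc (c (p@w')) + 1
   \<Longrightarrow> (w' = w \<and> x' = x @ [j]) \<or> (\<exists>i. w' = w @ [i] \<and> x' = [] \<and> x @ [j] = replicate (Suc (c (p@w))) 0 @ [i, 0])"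
proof (induction w arbitrary: p w')
  case Nil
  show ?case
  proof (cases w')
    case (Cons i w'')
    have "x @ [j] = phi_aux c p w' @ x'" using Nil.prems(1) by simp
    then have "length (x @ [j]) = length (phi_aux c p w') + length x'" by simp
    moreover have "length (phi_aux c p w') = Suc (c p) + 2 + length (phi_aux c (p @ [i]) w'')"
      unfolding Cons by simp
    ultimately have L: "Suc (length x) = Suc (c p) + 2 + length (phi_aux c (p @ [i]) w'') + length x'"
      by simp
    then have "length (phi_aux c (p @ [i]) w'') = 0" "length x' = 0" using Nil.prems(2) by simp_all
    then have "w'' = []" "x' = []" by simp_all
    then show ?thesis using Nil.prems(1) Cons by simp
  qed (use Nil.prems in simp)
next
  case (Cons i w1)
  show ?case
  proof (cases w')
    case Nil
    then have "x' = phi_aux c p (i # w1) @ x @ [j]" using Cons.prems(1) by simp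
    then have "length x' = length (phi_aux c p (i # w1)) + length x + 1" by simp
    moreover have "length (phi_aux c p (i # w1)) \<ge> Suc (c p) + 2" by simp
    ultimately show ?thesis using Cons.prems(3) Nil by simp
  next
    case (Cons i' w1')
    then have "i = i'" "phi_aux c (p @ [i]) w1' @ x' = phi_aux c (p @ [i]) w1 @ x @ [j]"
      using Cons.prems(1) by auto
    then show ?thesis using Cons.IH[of "p @ [i]" w1'] Cons.prems Cons by simp
  qed
qed

lemma prefix_replicate_snoc_cases:
  "prefix y (replicate n 0 @ [i]) \<Longrightarrow> (y = replicate (length y) 0 \<and> length y \<le> n) \<or> y = replicate n 0 @ [i]"
proof -
  assume "prefix y (replicate n 0 @ [i])"
  then obtain z where "replicate n 0 @ [i] = y @ z" by (rule prefixE)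
  then have y: "y = take (length y) (replicate n 0 @ [i])" by simp
  show ?thesis
  proof (cases "length y \<le> n")
    case True
    then have "take (length y) (replicate n 0 @ [i]) = replicate (length y) 0" by simp
    then show ?thesis using y True by simp
  next
    case False
    then have "length y = Suc n" using \<open>prefix y _\<close> prefix_length_le by fastforce
    then show ?thesis using y by simp
  qed
qed

lemma prefix_phi_aux_cases:
  "prefix s (phi_aux c p w) \<Longrightarrow> s = phi_aux c p w \<or>
    (\<exists>m<length w. \<exists>y. s = phi_aux c p (take m w) @ y \<and> prefix y (replicate (Suc (c (p @ take m w))) 0 @ [w ! m]))"
proof (induction w arbitrary: s rule: rev_induct)
  case Nil then show ?case by simp
next
  case (snoc i w)
  have "prefix s (phi_aux c p w @ (replicate (Suc (c (p @ w))) 0 @ [i]) @ [0])"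
    using snoc.prems by (simp add: phi_aux_snoc)
  then have "prefix s (phi_aux c p w) \<or> (\<exists>us. s = phi_aux c p w @ us \<and> prefix us ((replicate (Suc (c (p @ w))) 0 @ [i]) @ [0]))"
    by (simp add: prefix_append)
  then show ?case
  proof
    assume "prefix s (phi_aux c p w)"
    from snoc.IH[OF this] show ?thesis
    proof
      assume "s = phi_aux c p w"
      then show ?thesis by (intro disjI2 exI[of _ "length w"]) auto
    next
      assume "\<exists>m<length w. \<exists>y. s = phi_aux c p (take m w) @ y \<and> prefix y (replicate (Suc (c (p @ take m w))) 0 @ [w ! m])"
      then obtain m y where "m < length w" "s = phi_aux c p (take m w) @ y" "prefix y (replicate (Suc (c (p @ take m w))) 0 @ [w ! m])" by blast
      then show ?thesis by (intro disjI2 exI[of _ m]) (auto simp: nth_append)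
    qed
  next
    assume "\<exists>us. s = phi_aux c p w @ us \<and> prefix us ((replicate (Suc (c (p @ w))) 0 @ [i]) @ [0])"
    then obtain us where us: "s = phi_aux c p w @ us" "prefix us ((replicate (Suc (c (p @ w))) 0 @ [i]) @ [0])" by blast
    from us(2) have "prefix us (replicate (Suc (c (p @ w))) 0 @ [i]) \<or> us = (replicate (Suc (c (p @ w))) 0 @ [i]) @ [0]"
      by (metis prefix_snoc)
    then show ?thesis
    proof
      assume "prefix us (replicate (Suc (c (p @ w))) 0 @ [i])"
      then show ?thesis using us by (intro disjI2 exI[of _ "length w"]) auto
    next
      assume "us = (replicate (Suc (c (p @ w))) 0 @ [i]) @ [0]"
      then show ?thesis using us by (simp add: phi_aux_snoc)
    qed
  qed
qed

lemma prefix_replicate: "prefix us (replicate j (0::nat)) \<Longrightarrow> us = replicate (length us) 0 \<and> length us \<le> j"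
  using prefix_replicate_snoc_cases[of us j 0] prefix_length_le by fastforce

text \<open>Depth after \<open>i\<close> steps of the path that descends to a bud at depth \<open>a + L\<close>
  and keeps jumping back to its companion at depth \<open>a\<close>.\<close>
definition cycle_index :: "nat \<Rightarrow> nat \<Rightarrow> nat \<Rightarrow> nat" where
  "cycle_index a L i = (if i < a then i else a + (i - a) mod Suc L)"

lemma cycle_index_le: "cycle_index a L i \<le> a + L"
  unfolding cycle_index_def using mod_less_divisor[of "Suc L"] by (simp add: less_Suc_eq_le)

lemma cycle_index_Suc:
  "cycle_index a L (Suc i) = (if cycle_index a L i = a + L then a else Suc (cycle_index a L i))"
  unfolding cycle_index_def
  by (cases "Suc i < a"; cases "i < a") (auto simp: Suc_diff_le mod_Suc)

lemma cycle_index_period: "m \<le> L \<Longrightarrow> cycle_index a L (a + Suc L * n + m) = a + m"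
  using mod_mult_self2[of m "Suc L" n] unfolding cycle_index_def by (simp add: add.commute)

lemma cycle_index_late: "a \<le> i \<Longrightarrow> \<exists>m \<le> L. cycle_index a L i = a + m"
  unfolding cycle_index_def using mod_less_divisor[of "Suc L"] by (auto simp: less_Suc_eq_le)

section \<open>The expansion of an S-proof\<close>

locale S_proof_setting =
  fixes \<alpha> :: "'a::{finite,semilattice_sup,order_bot}"
    and \<iota> :: "'s::finite \<Rightarrow> 'x set"
    and cncl :: "'r::finite \<Rightarrow> 's"
    and prms :: "'r \<Rightarrow> 's list"
    and tr :: "'r \<Rightarrow> nat \<Rightarrow> ('x \<times> 'a \<times> 'x) set"
    and gs :: "'x set \<Rightarrow> 'x set \<Rightarrow> ('x \<times> 'a \<times> 'x) set \<Rightarrow> ('x,'a) board \<Rightarrow> ('x,'a) board"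
    and P :: "('s \<times> ('x,'a) board, 'r \<times> ('x,'a) board) preproof"
  assumes alpha_nonzero: "\<alpha> \<noteq> bot"
    and finite_interp: "\<forall>\<Gamma>. finite (\<iota> \<Gamma>)"
    and trace_maps: "\<forall>R i. i < length (prms R) \<longrightarrow> tr R i \<subseteq> \<iota> (cncl R) \<times> UNIV \<times> \<iota> (prms R ! i)"
    and greedy_choice: "greedy_choice_ok \<alpha> (Kmax \<iota>) \<iota> cncl prms tr gs"
    and S_proof: "S_proof \<alpha> (Kmax \<iota>) \<iota> cncl prms tr gs P"
begin

lemma S_preproof: "is_preproof (S_seq \<alpha> (Kmax \<iota>) \<iota>) (S_ok \<alpha> (Kmax \<iota>) \<iota> cncl prms tr gs) P"
  using S_proof unfolding S_proof_def by blast

lemma S_path_condition: "inf_path P p \<Longrightarrow> \<exists>N \<gamma>. (\<forall>i\<ge>N. \<gamma> \<in> set (fst (snd (lbl P (p i)))))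
    \<and> infinite {i. covered (snd (lbl P (p i))) \<gamma>}"
  using S_proof unfolding S_proof_def by blast

lemma S_finite: "finite (nodes P)" and S_root: "[] \<in> nodes P"
  and S_prefix_closed: "t \<in> nodes P \<Longrightarrow> prefix s t \<Longrightarrow> s \<in> nodes P"
  using S_preproof unfolding is_preproof_def by blast+

lemma board_on_lbl: "t \<in> nodes P \<Longrightarrow> board_on (\<iota> (fst (lbl P t))) (snd (lbl P t))"
  using S_preproof unfolding is_preproof_def S_seq_def sparse_def by blast

lemma leaf_no_child: "t \<in> nodes P \<Longrightarrow> rul P t = None \<Longrightarrow> t @ [j] \<notin> nodes P"
  using S_preproof unfolding is_preproof_def by fastforce

lemma leaf_is_bud: "t \<in> nodes P \<Longrightarrow> rul P t = None \<Longrightarrow> bud P t \<noteq> None"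
  using S_proof unfolding S_proof_def assumption_free_def by blast

lemma bud_props: "bud P t = Some c \<Longrightarrow> t \<in> nodes P \<and> rul P t = None \<and> strict_prefix c t
    \<and> (\<exists>j. c @ [j] \<in> nodes P) \<and> lbl P c = lbl P t"
  using S_preproof unfolding is_preproof_def by blast

lemma rule_node_props:
  assumes "t \<in> nodes P" "rul P t = Some (R, B)"
  shows "lbl P t = (cncl R, B) \<and> sparse \<alpha> (Kmax \<iota>) (\<iota> (cncl R)) B
    \<and> (\<forall>j. t @ [j] \<in> nodes P \<longleftrightarrow> j < length (prms R))
    \<and> (\<forall>i < length (prms R). lbl P (t @ [i]) = (prms R ! i,
          thin_board (gs (\<iota> (cncl R)) (\<iota> (prms R ! i)) (tr R i) B)))"
proof -
  have "case rul P t of None \<Rightarrow> (\<forall>j. t @ [j] \<notin> nodes P)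
      | Some k \<Rightarrow> (\<exists>n. (\<forall>j. t @ [j] \<in> nodes P \<longleftrightarrow> j < n)
          \<and> S_ok \<alpha> (Kmax \<iota>) \<iota> cncl prms tr gs (lbl P t) k (map (\<lambda>j. lbl P (t @ [j])) [0..<n]))"
    using S_preproof assms(1) unfolding is_preproof_def by blast
  then obtain n where n: "\<forall>j. t @ [j] \<in> nodes P \<longleftrightarrow> j < n"
    and ok: "S_ok \<alpha> (Kmax \<iota>) \<iota> cncl prms tr gs (lbl P t) (R, B) (map (\<lambda>j. lbl P (t @ [j])) [0..<n])"
    using assms(2) by auto
  let ?prm = "\<lambda>i. (prms R ! i, thin_board (gs (\<iota> (cncl R)) (\<iota> (prms R ! i)) (tr R i) B))"
  have m: "map (\<lambda>j. lbl P (t @ [j])) [0..<n] = map ?prm [0..<length (prms R)]"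
    using ok unfolding S_ok_def by simp
  from arg_cong[OF m, of length] have len: "n = length (prms R)" by simp
  have "lbl P (t @ [i]) = ?prm i" if "i < length (prms R)" for i
    using arg_cong[OF m, of "\<lambda>l. l ! i"] that len by simp
  moreover have "lbl P t = (cncl R, B)" "sparse \<alpha> (Kmax \<iota>) (\<iota> (cncl R)) B"
    using ok unfolding S_ok_def by (auto simp: prod_eq_iff)
  ultimately show ?thesis using n len by blast
qed

text \<open>The expansion of a node \<open>t\<close> with rule \<open>R(B)\<close> occupies the addresses
  \<open>phi P t @ x\<close>, \<open>x \<in> block t\<close>. With \<open>k = length (cov_list B)\<close>, the resets sit at
  \<open>replicate j 0\<close> for \<open>j < k\<close>, Pop at \<open>replicate k 0\<close>, the annotated rule at
  \<open>replicate (k + 1) 0\<close> and the weakening to its \<open>i\<close>-th premise at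
  \<open>replicate (k + 1) 0 @ [i]\<close>, whose only child \<open>@ [0]\<close> is \<open>phi P (t @ [i])\<close>.\<close>
definition block :: "nat list \<Rightarrow> nat list set" where
  "block t = (case rul P t of None \<Rightarrow> {[]} | Some (R, B) \<Rightarrow>
     (\<lambda>j. replicate j 0) ` {..Suc (length (cov_list B))}
     \<union> (\<lambda>i. replicate (Suc (length (cov_list B))) 0 @ [i]) ` {..<length (prms R)})"

definition block_entry :: "nat list \<Rightarrow> nat list \<Rightarrow> ('s \<times> ('x,'a) board) \<times> 'r rkind option" where
  "block_entry t x = (case rul P t of None \<Rightarrow> (lbl P t, None) | Some (R, B) \<Rightarrow>
    if length x < length (cov_list B)
      then ((cncl R, reset_stage B (length x)), Some (RReset (rev (cov_list B) ! length x)))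
    else if length x = length (cov_list B) then ((cncl R, reset_stage B (length x)), Some RPop)
    else if length x = Suc (length (cov_list B)) then ((cncl R, greedy_pre (\<iota> (cncl R)) B), Some (RRule R))
    else ((prms R ! last x, gs (\<iota> (cncl R)) (\<iota> (prms R ! last x)) (tr R (last x)) B), Some RWeak))"

lemma replicate_in_block: "rul P t = Some (R, B) \<Longrightarrow> j \<le> Suc (length (cov_list B)) \<Longrightarrow> replicate j 0 \<in> block t"
  unfolding block_def by auto

lemma weak_in_block: "rul P t = Some (R, B) \<Longrightarrow> i < length (prms R)
   \<Longrightarrow> replicate (Suc (length (cov_list B))) 0 @ [i] \<in> block t"
  unfolding block_def by auto

lemma block_leaf: "rul P t = None \<Longrightarrow> block t = {[]}"
  unfolding block_def by simp

lemma block_rule_cases: "rul P t = Some (R, B) \<Longrightarrow> x \<in> block t \<Longrightarrow>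
   (\<exists>j\<le>Suc (length (cov_list B)). x = replicate j 0) \<or> (\<exists>i<length (prms R). x = replicate (Suc (length (cov_list B))) 0 @ [i])"
  unfolding block_def by auto

abbreviation "entries \<equiv> exp_entries \<iota> cncl prms tr gs P"
abbreviation "expanded \<equiv> expand \<iota> cncl prms tr gs P"

lemma entries_subset: "entries \<subseteq> {(phi P t @ x, block_entry t x) | t x. t \<in> nodes P \<and> x \<in> block t}"
  unfolding exp_entries_def
  by (intro subsetI, elim UnE CollectE exE conjE)
    (force simp: block_entry_def block_leaf replicate_in_block weak_in_block simp del: replicate_Suc)+

lemma block_entry_in_entries:
  assumes t: "t \<in> nodes P" and x: "x \<in> block t"
  shows "(phi P t @ x, block_entry t x) \<in> entries"
proof (cases "rul P t")
  case None
  then show ?thesis using t x unfolding exp_entries_def by (auto simp: block_leaf block_entry_def)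
next
  case (Some k)
  then obtain R B where RB: "rul P t = Some (R, B)" by (cases k) auto
  let ?k = "length (cov_list B)"
  from block_rule_cases[OF RB x] show ?thesis
  proof (elim disjE exE conjE)
    fix j assume j: "j \<le> Suc ?k" and x: "x = replicate j 0"
    consider (reset) "j < ?k" | (pop) "j = ?k" | (rule) "j = Suc ?k" using j by linarith
    then show ?thesis
    proof cases
      case reset
      then have "block_entry t x = ((cncl R, reset_stage B j), Some (RReset (rev (cov_list B) ! j)))"
        using RB x by (simp add: block_entry_def)
      then show ?thesis using t RB reset unfolding x exp_entries_def by blast
    next
      case pop
      then have "block_entry t x = ((cncl R, reset_stage B ?k), Some RPop)"
        using RB x by (simp add: block_entry_def)
      then show ?thesis using t RB unfolding x pop exp_entries_def by blast
    next
      case rule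
      then have "block_entry t x = ((cncl R, greedy_pre (\<iota> (cncl R)) B), Some (RRule R))"
        using RB x by (simp add: block_entry_def del: replicate_Suc)
      then show ?thesis using t RB unfolding x rule exp_entries_def by blast
    qed
  next
    fix i assume "i < length (prms R)" "x = replicate (Suc ?k) 0 @ [i]"
    moreover from this have "block_entry t x
        = ((prms R ! i, gs (\<iota> (cncl R)) (\<iota> (prms R ! i)) (tr R i) B), Some RWeak)"
      using RB by (simp add: block_entry_def del: replicate_Suc)
    ultimately show ?thesis using t RB unfolding exp_entries_def by blast
  qed
qed

lemma entries_eq: "entries = {(phi P t @ x, block_entry t x) | t x. t \<in> nodes P \<and> x \<in> block t}"
  using entries_subset block_entry_in_entries by blast

lemma Nil_in_block: "[] \<in> block t"
  unfolding block_def by (cases "rul P t") (auto intro: image_eqI[of _ _ 0])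

lemma length_block: "x \<in> block t \<Longrightarrow> length x \<le> Suc (cov_count P t) + 1"
  unfolding block_def cov_count_def by (cases "rul P t") auto

lemma phi_block_inj: "x \<in> block t \<Longrightarrow> x' \<in> block t' \<Longrightarrow> phi P t @ x = phi P t' @ x' \<Longrightarrow> t = t' \<and> x = x'"
  using phi_aux_append_inj[of "cov_count P" "[]" t x t' x'] length_block[of x t] length_block[of x' t'] unfolding phi_def by simp

lemma phi_inj: "phi P t = phi P t' \<Longrightarrow> t = t'"
  using phi_block_inj[OF Nil_in_block Nil_in_block, of t t'] by simp

lemma nodes_expand: "nodes expanded = fst ` entries"
  unfolding expand_def Let_def by simp

lemma nodes_expand_iff: "s \<in> nodes expanded \<longleftrightarrow> (\<exists>t x. t \<in> nodes P \<and> x \<in> block t \<and> s = phi P t @ x)"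
proof
  assume "s \<in> nodes expanded"
  then obtain e where "e \<in> entries" "s = fst e" unfolding nodes_expand by blast
  then show "\<exists>t x. t \<in> nodes P \<and> x \<in> block t \<and> s = phi P t @ x" unfolding entries_eq by auto
next
  assume "\<exists>t x. t \<in> nodes P \<and> x \<in> block t \<and> s = phi P t @ x"
  then obtain t x where "t \<in> nodes P" "x \<in> block t" "s = phi P t @ x" by blast
  then show "s \<in> nodes expanded" unfolding nodes_expand using block_entry_in_entries by force
qed

lemma entry_choice: assumes "t \<in> nodes P" "x \<in> block t"
  shows "(SOME e. e \<in> entries \<and> fst e = phi P t @ x) = (phi P t @ x, block_entry t x)"
proof (rule some_equality)
  show "(phi P t @ x, block_entry t x) \<in> entries \<and> fst (phi P t @ x, block_entry t x) = phi P t @ x"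
    using block_entry_in_entries[OF assms] by simp
next
  fix e assume e: "e \<in> entries \<and> fst e = phi P t @ x"
  then obtain t' x' where "t' \<in> nodes P" "x' \<in> block t'" "e = (phi P t' @ x', block_entry t' x')"
    unfolding entries_eq by blast
  moreover then have "t' = t \<and> x' = x" using phi_block_inj[OF _ assms(2)] e by auto
  ultimately show "e = (phi P t @ x, block_entry t x)" by simp
qed

lemma lbl_expand: "t \<in> nodes P \<Longrightarrow> x \<in> block t \<Longrightarrow> lbl expanded (phi P t @ x) = fst (block_entry t x)"
  unfolding expand_def Let_def by (simp add: entry_choice)

lemma rul_expand: "t \<in> nodes P \<Longrightarrow> x \<in> block t \<Longrightarrow> rul expanded (phi P t @ x) = snd (block_entry t x)"
  unfolding expand_def Let_def by (simp add: entry_choice)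

lemma bud_expand: "bud expanded s = (if \<exists>t\<in>nodes P. phi P t = s \<and> bud P t \<noteq> None
                   then Some (phi P (the (bud P (SOME t. t \<in> nodes P \<and> phi P t = s \<and> bud P t \<noteq> None))))
                   else None)"
  unfolding expand_def Let_def by simp

lemma bud_expand_SomeD: "bud expanded s = Some c' \<Longrightarrow> \<exists>t c. t \<in> nodes P \<and> bud P t = Some c \<and> s = phi P t \<and> c' = phi P c"
proof -
  assume a: "bud expanded s = Some c'"
  then have ex: "\<exists>t\<in>nodes P. phi P t = s \<and> bud P t \<noteq> None" unfolding bud_expand by (auto split: if_splits)
  then obtain t where t: "t \<in> nodes P" "phi P t = s" "bud P t \<noteq> None" by blast
  have "(SOME t. t \<in> nodes P \<and> phi P t = s \<and> bud P t \<noteq> None) = t"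
    using t phi_inj by (intro some_equality) auto
  then have "c' = phi P (the (bud P t))" using a ex unfolding bud_expand by simp
  then show ?thesis using t by (intro exI[of _ t] exI[of _ "the (bud P t)"]) auto
qed

lemma bud_expand_phi: "t \<in> nodes P \<Longrightarrow> bud P t = Some c \<Longrightarrow> bud expanded (phi P t) = Some (phi P c)"
proof -
  assume t: "t \<in> nodes P" "bud P t = Some c"
  have "(SOME t'. t' \<in> nodes P \<and> phi P t' = phi P t \<and> bud P t' \<noteq> None) = t"
    using t phi_inj by (intro some_equality) auto
  then show ?thesis unfolding bud_expand using t by auto
qed

lemma cov_count_rule: "rul P t = Some (R, B) \<Longrightarrow> cov_count P t = length (cov_list B)"
  unfolding cov_count_def by simp

lemma phi_snoc: "phi P (t @ [i]) = phi P t @ replicate (Suc (cov_count P t)) 0 @ [i, 0]"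
  unfolding phi_def phi_aux_snoc by simp

lemma child_in_expand_iff:
  assumes "t \<in> nodes P" "x \<in> block t"
  shows "phi P t @ x @ [j] \<in> nodes expanded \<longleftrightarrow>
    (x @ [j] \<in> block t \<or> (\<exists>i. t @ [i] \<in> nodes P \<and> x @ [j] = replicate (Suc (cov_count P t)) 0 @ [i, 0]))"
proof
  assume "phi P t @ x @ [j] \<in> nodes expanded"
  then obtain t' x' where t': "t' \<in> nodes P" "x' \<in> block t'" "phi P t @ x @ [j] = phi P t' @ x'"
    unfolding nodes_expand_iff by blast
  have "(t' = t \<and> x' = x @ [j]) \<or> (\<exists>i. t' = t @ [i] \<and> x' = [] \<and> x @ [j] = replicate (Suc (cov_count P ([] @ t))) 0 @ [i, 0])"
    using phi_aux_append_snoc_cases[of "cov_count P" "[]" t' x' t x j] t'(3)[symmetric] length_block[OF assms(2)] length_block[OF t'(2)]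
    unfolding phi_def by simp
  then show "x @ [j] \<in> block t \<or> (\<exists>i. t @ [i] \<in> nodes P \<and> x @ [j] = replicate (Suc (cov_count P t)) 0 @ [i, 0])"
    using t' by auto
next
  assume "x @ [j] \<in> block t \<or> (\<exists>i. t @ [i] \<in> nodes P \<and> x @ [j] = replicate (Suc (cov_count P t)) 0 @ [i, 0])"
  then show "phi P t @ x @ [j] \<in> nodes expanded"
  proof
    assume "x @ [j] \<in> block t"
    then show ?thesis unfolding nodes_expand_iff using assms by blast
  next
    assume "\<exists>i. t @ [i] \<in> nodes P \<and> x @ [j] = replicate (Suc (cov_count P t)) 0 @ [i, 0]"
    then obtain i where i: "t @ [i] \<in> nodes P" "x @ [j] = replicate (Suc (cov_count P t)) 0 @ [i, 0]" by blast
    then have "phi P t @ x @ [j] = phi P (t @ [i]) @ []" by (simp add: phi_snoc)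
    then show ?thesis unfolding nodes_expand_iff using i(1) Nil_in_block by blast
  qed
qed

lemma replicate_snoc_eq_replicate: "replicate a 0 @ [m] = replicate b (0::nat) \<Longrightarrow> m = 0"
proof -
  assume "replicate a 0 @ [m] = replicate b (0::nat)"
  then have "m \<in> set (replicate b (0::nat))" by (metis in_set_conv_decomp)
  then show ?thesis by (simp split: if_splits)
qed

lemma children_reset_node:
  assumes "t \<in> nodes P" "rul P t = Some (R, B)" "j \<le> length (cov_list B)"
  shows "phi P t @ replicate j 0 @ [m] \<in> nodes expanded \<longleftrightarrow> m < 1"
proof -
  let ?k = "length (cov_list B)"
  have x: "replicate j 0 \<in> block t" using assms by (intro replicate_in_block) auto
  have "replicate j 0 @ [m] \<in> block t \<longleftrightarrow> m = 0"
  proof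
    assume "replicate j 0 @ [m] \<in> block t"
    from block_rule_cases[OF assms(2) this] show "m = 0"
    proof (elim disjE exE conjE)
      fix j' assume "replicate j 0 @ [m] = replicate j' 0" then show "m = 0" by (rule replicate_snoc_eq_replicate)
    next
      fix i assume "i < length (prms R)" "replicate j 0 @ [m] = replicate (Suc ?k) 0 @ [i]"
      then have "length (replicate j 0 @ [m]) = length (replicate (Suc ?k) 0 @ [i])" by simp
      then show "m = 0" using assms(3) by simp
    qed
  next
    assume "m = 0"
    then have "replicate j 0 @ [m] = replicate (Suc j) 0" by (simp add: replicate_append_same)
    then show "replicate j 0 @ [m] \<in> block t" using assms by (simp only:) (intro replicate_in_block, auto)
  qed
  moreover have "\<not> (replicate j 0 @ [m] = replicate (Suc (cov_count P t)) 0 @ [i, 0])" for i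
  proof
    assume "replicate j 0 @ [m] = replicate (Suc (cov_count P t)) 0 @ [i, 0]"
    then have "length (replicate j 0 @ [m]) = length (replicate (Suc (cov_count P t)) 0 @ [i, 0])" by simp
    then show False using assms cov_count_rule by simp
  qed
  ultimately show ?thesis using child_in_expand_iff[OF assms(1) x] by auto
qed

lemma children_rule_node:
  assumes "t \<in> nodes P" "rul P t = Some (R, B)"
  shows "phi P t @ replicate (Suc (length (cov_list B))) 0 @ [m] \<in> nodes expanded \<longleftrightarrow> m < length (prms R)"
proof -
  let ?k = "length (cov_list B)"
  have x: "replicate (Suc ?k) 0 \<in> block t" using assms by (intro replicate_in_block) auto
  have "replicate (Suc ?k) 0 @ [m] \<in> block t \<longleftrightarrow> m < length (prms R)"
  proof
    assume "replicate (Suc ?k) 0 @ [m] \<in> block t"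
    from block_rule_cases[OF assms(2) this] show "m < length (prms R)"
    proof (elim disjE exE conjE)
      fix j' assume "j' \<le> Suc ?k" "replicate (Suc ?k) 0 @ [m] = replicate j' 0"
      then have "length (replicate (Suc ?k) 0 @ [m]) = length (replicate j' (0::nat))" by simp
      then show ?thesis using \<open>j' \<le> Suc ?k\<close> by simp
    next
      fix i assume "i < length (prms R)" "replicate (Suc ?k) 0 @ [m] = replicate (Suc ?k) 0 @ [i]"
      then show ?thesis by simp
    qed
  next
    assume "m < length (prms R)"
    then show "replicate (Suc ?k) 0 @ [m] \<in> block t" using assms by (intro weak_in_block)
  qed
  moreover have "\<not> (replicate (Suc ?k) 0 @ [m] = replicate (Suc (cov_count P t)) 0 @ [i, 0])" for i
  proof
    assume "replicate (Suc ?k) 0 @ [m] = replicate (Suc (cov_count P t)) 0 @ [i, 0]"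
    then have "length (replicate (Suc ?k) 0 @ [m]) = length (replicate (Suc (cov_count P t)) 0 @ [i, 0])" by simp
    then show False using assms cov_count_rule by simp
  qed
  ultimately show ?thesis using child_in_expand_iff[OF assms(1) x] by (auto simp del: replicate_Suc)
qed

lemma children_weak_node:
  assumes "t \<in> nodes P" "rul P t = Some (R, B)" "i < length (prms R)"
  shows "phi P t @ (replicate (Suc (length (cov_list B))) 0 @ [i]) @ [m] \<in> nodes expanded \<longleftrightarrow> m < 1"
proof -
  let ?k = "length (cov_list B)"
  have x: "replicate (Suc ?k) 0 @ [i] \<in> block t" using assms by (intro weak_in_block)
  have "(replicate (Suc ?k) 0 @ [i]) @ [m] \<notin> block t"
  proof
    assume "(replicate (Suc ?k) 0 @ [i]) @ [m] \<in> block t"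
    from length_block[OF this] show False using cov_count_rule[OF assms(2)] by simp
  qed
  moreover have "(\<exists>i'. t @ [i'] \<in> nodes P \<and> (replicate (Suc ?k) 0 @ [i]) @ [m] = replicate (Suc (cov_count P t)) 0 @ [i', 0])
     \<longleftrightarrow> m = 0"
    using rule_node_props[OF assms(1,2)] assms(3) cov_count_rule[OF assms(2)] by (auto simp del: replicate_Suc)
  ultimately show ?thesis using child_in_expand_iff[OF assms(1) x] by auto
qed

lemma block_entry_leaf: "rul P t = None \<Longrightarrow> block_entry t x = (lbl P t, None)"
  unfolding block_entry_def by simp

lemma block_entry_reset: "rul P t = Some (R, B) \<Longrightarrow> j < length (cov_list B) \<Longrightarrow>
  block_entry t (replicate j 0) = ((cncl R, reset_stage B j), Some (RReset (rev (cov_list B) ! j)))"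
  unfolding block_entry_def by simp

lemma block_entry_pop: "rul P t = Some (R, B) \<Longrightarrow>
  block_entry t (replicate (length (cov_list B)) 0) = ((cncl R, reset_stage B (length (cov_list B))), Some RPop)"
  unfolding block_entry_def by simp

lemma block_entry_stage: "rul P t = Some (R, B) \<Longrightarrow> j \<le> length (cov_list B) \<Longrightarrow>
  fst (block_entry t (replicate j 0)) = (cncl R, reset_stage B j)"
  unfolding block_entry_def by auto

lemma block_entry_rule: "rul P t = Some (R, B) \<Longrightarrow>
  block_entry t (replicate (Suc (length (cov_list B))) 0) = ((cncl R, greedy_pre (\<iota> (cncl R)) B), Some (RRule R))"
  unfolding block_entry_def by (simp del: replicate_Suc)

lemma block_entry_weak: "rul P t = Some (R, B) \<Longrightarrow>
  block_entry t (replicate (Suc (length (cov_list B))) 0 @ [i]) =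
    ((prms R ! i, gs (\<iota> (cncl R)) (\<iota> (prms R ! i)) (tr R i) B), Some RWeak)"
  unfolding block_entry_def by (simp del: replicate_Suc)

lemma lbl_expand_phi: "t \<in> nodes P \<Longrightarrow> lbl expanded (phi P t) = lbl P t"
proof -
  assume t: "t \<in> nodes P"
  have "lbl expanded (phi P t @ []) = fst (block_entry t [])" using lbl_expand[OF t Nil_in_block] .
  moreover have "fst (block_entry t []) = lbl P t"
  proof (cases "rul P t")
    case None then show ?thesis by (simp add: block_entry_leaf)
  next
    case (Some k)
    obtain R B where k: "k = (R, B)" by (rule prod.exhaust)
    have "fst (block_entry t (replicate 0 0)) = (cncl R, reset_stage B 0)" using Some k by (intro block_entry_stage) auto
    then show ?thesis using rule_node_props[OF t] Some k by simp
  qed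
  ultimately show ?thesis by simp
qed

lemma greedy_choice_at:
  assumes "i < length (prms R)" "sparse \<alpha> (Kmax \<iota>) (\<iota> (cncl R)) B"
  shows "successor \<alpha> (tr R i) (greedy_pre (\<iota> (cncl R)) B) (gs (\<iota> (cncl R)) (\<iota> (prms R ! i)) (tr R i) B)
   \<and> sparse \<alpha> (Kmax \<iota>) (\<iota> (prms R ! i)) (thin_board (gs (\<iota> (cncl R)) (\<iota> (prms R ! i)) (tr R i) B))
   \<and> set (fst (thin_board (gs (\<iota> (cncl R)) (\<iota> (prms R ! i)) (tr R i) B))) \<inter> set (fst B)
      = \<Inter> ((\<lambda>C. set (fst C)) ` ({reset_stage B j | j. j \<le> length (cov_list B)}
          \<union> {greedy_pre (\<iota> (cncl R)) B, gs (\<iota> (cncl R)) (\<iota> (prms R ! i)) (tr R i) B,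
             thin_board (gs (\<iota> (cncl R)) (\<iota> (prms R ! i)) (tr R i) B)}))"
  using greedy_choice[unfolded greedy_choice_ok_def Let_def, rule_format, OF assms] .

lemma board_on_gs:
  assumes "i < length (prms R)" "sparse \<alpha> (Kmax \<iota>) (\<iota> (cncl R)) B"
  shows "board_on (\<iota> (prms R ! i)) (gs (\<iota> (cncl R)) (\<iota> (prms R ! i)) (tr R i) B)"
proof -
  have bo: "board_on (\<iota> (cncl R)) (greedy_pre (\<iota> (cncl R)) B)"
    using assms(2) unfolding sparse_def by (intro board_on_greedy_pre) blast
  have r: "\<forall>x c y. (x, c, y) \<in> tr R i \<longrightarrow> y \<in> \<iota> (prms R ! i)" using trace_maps assms(1) by blast
  show ?thesis using board_on_successor[OF bo _ r] greedy_choice_at[OF assms] finite_interp alpha_nonzero by blast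
qed

lemma finite_block: "finite (block t)"
  unfolding block_def by (cases "rul P t") auto

lemma finite_expand: "finite (nodes expanded)"
proof -
  have "nodes expanded \<subseteq> (\<Union>t\<in>nodes P. (\<lambda>x. phi P t @ x) ` block t)"
  proof
    fix s assume "s \<in> nodes expanded"
    then obtain t x where "t \<in> nodes P" "x \<in> block t" "s = phi P t @ x" unfolding nodes_expand_iff by blast
    then show "s \<in> (\<Union>t\<in>nodes P. (\<lambda>x. phi P t @ x) ` block t)" by blast
  qed
  moreover have "finite (\<Union>t\<in>nodes P. (\<lambda>x. phi P t @ x) ` block t)"
    by (intro finite_UN_I S_finite finite_imageI finite_block)
  ultimately show ?thesis by (rule finite_subset)
qed

lemma root_expand: "[] \<in> nodes expanded"
proof -
  have "\<exists>t x. t \<in> nodes P \<and> x \<in> block t \<and> [] = phi P t @ x"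
    by (rule exI[of _ "[]"], rule exI[of _ "[]"]) (simp add: S_root Nil_in_block phi_def)
  then show ?thesis unfolding nodes_expand_iff .
qed

lemma child_rule_node: "t @ [i] \<in> nodes P \<Longrightarrow> \<exists>R B. rul P t = Some (R, B) \<and> i < length (prms R)"
proof -
  assume a: "t @ [i] \<in> nodes P"
  have t: "t \<in> nodes P" using S_prefix_closed[OF a prefixI[OF refl]] .
  then have "rul P t \<noteq> None" using leaf_no_child a by blast
  then obtain R B where "rul P t = Some (R, B)" by fastforce
  then show ?thesis using rule_node_props[OF t] a by blast
qed

lemma block_prefix_closed: "x \<in> block t \<Longrightarrow> prefix us x \<Longrightarrow> us \<in> block t"
proof (cases "rul P t")
  case None
  assume "x \<in> block t" "prefix us x"
  then show ?thesis using None block_leaf by simp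
next
  case (Some k)
  assume x: "x \<in> block t" and p: "prefix us x"
  obtain R B where k: "k = (R, B)" by (rule prod.exhaust)
  have S: "rul P t = Some (R, B)" using Some k by simp
  from block_rule_cases[OF S x] show ?thesis
  proof (elim disjE exE conjE)
    fix j assume j: "j \<le> Suc (length (cov_list B))" "x = replicate j 0"
    then have "us = replicate (length us) 0 \<and> length us \<le> j" using p prefix_replicate by simp
    then show ?thesis using replicate_in_block[OF S, of "length us"] j by simp
  next
    fix i assume i: "i < length (prms R)" "x = replicate (Suc (length (cov_list B))) 0 @ [i]"
    from prefix_replicate_snoc_cases[OF p[unfolded i(2)]] show ?thesis
      using replicate_in_block[OF S, of "length us"] weak_in_block[OF S i(1)] by auto
  qed
qed

lemma prefix_phi_in_expand: "t \<in> nodes P \<Longrightarrow> prefix s (phi P t) \<Longrightarrow> s \<in> nodes expanded"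
proof -
  assume t: "t \<in> nodes P" and p: "prefix s (phi P t)"
  from prefix_phi_aux_cases[OF p[unfolded phi_def]] show ?thesis
  proof
    assume "s = phi_aux (cov_count P) [] t"
    then have "s = phi P t @ []" unfolding phi_def by simp
    then show ?thesis unfolding nodes_expand_iff using t Nil_in_block by blast
  next
    assume "\<exists>m<length t. \<exists>y. s = phi_aux (cov_count P) [] (take m t) @ y \<and>
            prefix y (replicate (Suc (cov_count P ([] @ take m t))) 0 @ [t ! m])"
    then obtain m y where m: "m < length t" "s = phi P (take m t) @ y"
      "prefix y (replicate (Suc (cov_count P (take m t))) 0 @ [t ! m])" unfolding phi_def by auto
    have "take (Suc m) t = take m t @ [t ! m]" using m(1) by (simp add: take_Suc_conv_app_nth)
    moreover have "take (Suc m) t \<in> nodes P" using S_prefix_closed[OF t] by (simp add: take_is_prefix)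
    ultimately have c: "take m t @ [t ! m] \<in> nodes P" by simp
    have u: "take m t \<in> nodes P" using S_prefix_closed[OF c prefixI[OF refl]] .
    obtain R B where RB: "rul P (take m t) = Some (R, B)" "t ! m < length (prms R)" using child_rule_node[OF c] by blast
    have "y \<in> block (take m t)"
      using prefix_replicate_snoc_cases[OF m(3)] replicate_in_block[OF RB(1), of "length y"] weak_in_block[OF RB] cov_count_rule[OF RB(1)] by auto
    then show ?thesis unfolding nodes_expand_iff using u m(2) by blast
  qed
qed

lemma expand_prefix_closed: "s \<in> nodes expanded \<Longrightarrow> prefix s' s \<Longrightarrow> s' \<in> nodes expanded"
proof -
  assume "s \<in> nodes expanded" "prefix s' s"
  then obtain t x where tx: "t \<in> nodes P" "x \<in> block t" "s = phi P t @ x" unfolding nodes_expand_iff by blast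
  from \<open>prefix s' s\<close> tx(3) have "prefix s' (phi P t) \<or> (\<exists>us. s' = phi P t @ us \<and> prefix us x)"
    by (simp add: prefix_append)
  then show ?thesis
  proof
    assume "prefix s' (phi P t)" then show ?thesis using prefix_phi_in_expand tx by blast
  next
    assume "\<exists>us. s' = phi P t @ us \<and> prefix us x"
    then obtain us where "s' = phi P t @ us" "prefix us x" by blast
    then show ?thesis unfolding nodes_expand_iff using tx block_prefix_closed by blast
  qed
qed

lemma expand_sequents: "s \<in> nodes expanded \<Longrightarrow> R_seq \<iota> (lbl expanded s)"
proof -
  assume "s \<in> nodes expanded"
  then obtain t x where tx: "t \<in> nodes P" "x \<in> block t" "s = phi P t @ x" unfolding nodes_expand_iff by blast
  have l: "lbl expanded s = fst (block_entry t x)" using lbl_expand[OF tx(1,2)] tx(3) by simp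
  show ?thesis
  proof (cases "rul P t")
    case None
    then show ?thesis unfolding R_seq_def l using board_on_lbl[OF tx(1)] by (simp add: block_entry_leaf)
  next
    case (Some k)
    obtain R B where k: "k = (R, B)" by (rule prod.exhaust)
    have S: "rul P t = Some (R, B)" using Some k by simp
    have sp: "sparse \<alpha> (Kmax \<iota>) (\<iota> (cncl R)) B" using rule_node_props[OF tx(1) S] by blast
    then have bo: "board_on (\<iota> (cncl R)) B" unfolding sparse_def by blast
    from block_rule_cases[OF S tx(2)] show ?thesis
    proof (elim disjE exE conjE)
      fix j assume j: "j \<le> Suc (length (cov_list B))" "x = replicate j 0"
      show ?thesis
      proof (cases "j \<le> length (cov_list B)")
        case True
        then show ?thesis unfolding R_seq_def l j(2) block_entry_stage[OF S True]
          using board_on_reset_stage[OF bo] by simp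
      next
        case False
        then have "j = Suc (length (cov_list B))" using j by simp
        then show ?thesis unfolding R_seq_def l j(2) using block_entry_rule[OF S] board_on_greedy_pre[OF bo] by simp
      qed
    next
      fix i assume i: "i < length (prms R)" "x = replicate (Suc (length (cov_list B))) 0 @ [i]"
      show ?thesis unfolding R_seq_def l i(2) block_entry_weak[OF S] using board_on_gs[OF i(1) sp] by simp
    qed
  qed
qed

definition node_ok :: "nat list \<Rightarrow> bool" where
  "node_ok s \<longleftrightarrow> (case rul expanded s of
      None \<Rightarrow> (\<forall>j. s @ [j] \<notin> nodes expanded)
    | Some k \<Rightarrow> (\<exists>n. (\<forall>j. s @ [j] \<in> nodes expanded \<longleftrightarrow> j < n)
          \<and> R_ok \<alpha> \<iota> cncl prms tr (lbl expanded s) k (map (\<lambda>j. lbl expanded (s @ [j])) [0..<n])))"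

lemma node_ok_single_child:
  assumes "rul expanded s = Some k" "\<forall>m. s @ [m] \<in> nodes expanded \<longleftrightarrow> m < 1"
    and "R_ok \<alpha> \<iota> cncl prms tr (lbl expanded s) k [lbl expanded (s @ [0])]"
  shows "node_ok s"
  unfolding node_ok_def assms(1) option.case using assms(2,3) by (intro exI[of _ 1]) simp

lemma leaf_node_ok:
  assumes t: "t \<in> nodes P" and leaf: "rul P t = None"
  shows "node_ok (phi P t)"
proof -
  have "phi P t @ [j] \<notin> nodes expanded" for j
    using child_in_expand_iff[OF t Nil_in_block, of j] block_leaf[OF leaf] leaf_no_child[OF t leaf] by auto
  moreover have "rul expanded (phi P t) = None"
    using rul_expand[OF t Nil_in_block] leaf by (simp add: block_entry_leaf)
  ultimately show ?thesis unfolding node_ok_def by simp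
qed

context
  fixes t R B
  assumes t: "t \<in> nodes P" and RB: "rul P t = Some (R, B)"
begin

lemma board_on_rule_node: "board_on (\<iota> (cncl R)) B"
  using rule_node_props[OF t RB] unfolding sparse_def by blast

lemma reset_node_ok:
  assumes j: "j < length (cov_list B)"
  shows "node_ok (phi P t @ replicate j 0)"
proof (rule node_ok_single_child)
  let ?s = "phi P t @ replicate j 0"
  show "rul expanded ?s = Some (RReset (rev (cov_list B) ! j))"
    using rul_expand[OF t replicate_in_block[OF RB]] block_entry_reset[OF RB j] j by simp
  show "\<forall>m. ?s @ [m] \<in> nodes expanded \<longleftrightarrow> m < 1"
    using children_reset_node[OF t RB] j by simp
  have "lbl expanded ?s = (cncl R, reset_stage B j)"
    using lbl_expand[OF t replicate_in_block[OF RB]] block_entry_stage[OF RB] j by simp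
  moreover have "lbl expanded (?s @ [0]) = (cncl R, reset_stage B (Suc j))"
    using lbl_expand[OF t replicate_in_block[OF RB, of "Suc j"]] block_entry_stage[OF RB, of "Suc j"] j
    by (simp add: replicate_append_same)
  ultimately show "R_ok \<alpha> \<iota> cncl prms tr (lbl expanded ?s) (RReset (rev (cov_list B) ! j)) [lbl expanded (?s @ [0])]"
    unfolding R_ok_def using reset_stage_covered[OF board_on_rule_node j] reset_stage_Suc[OF j] by simp
qed

lemma pop_node_ok: "node_ok (phi P t @ replicate (length (cov_list B)) 0)"
proof (rule node_ok_single_child)
  let ?k = "length (cov_list B)" let ?s = "phi P t @ replicate ?k 0"
  let ?Pop = "{y \<in> \<iota> (cncl R). snd (reset_stage B ?k) y bot = {}}"
  show "rul expanded ?s = Some RPop"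
    using rul_expand[OF t replicate_in_block[OF RB]] block_entry_pop[OF RB] by simp
  show "\<forall>m. ?s @ [m] \<in> nodes expanded \<longleftrightarrow> m < 1"
    using children_reset_node[OF t RB] by simp
  have "lbl expanded ?s = (cncl R, reset_stage B ?k)"
    using lbl_expand[OF t replicate_in_block[OF RB]] block_entry_stage[OF RB] by simp
  moreover have "lbl expanded (?s @ [0]) = (cncl R, pop_board ?Pop (reset_stage B ?k))"
    using lbl_expand[OF t replicate_in_block[OF RB, of "Suc ?k"]] block_entry_rule[OF RB]
    by (simp add: replicate_append_same greedy_pre_def Let_def)
  moreover have "R_ok \<alpha> \<iota> cncl prms tr (cncl R, reset_stage B ?k) RPop
      [(cncl R, pop_board ?Pop (reset_stage B ?k))]"
    unfolding R_ok_def by (simp add: exI[of _ ?Pop])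
  ultimately show "R_ok \<alpha> \<iota> cncl prms tr (lbl expanded ?s) RPop [lbl expanded (?s @ [0])]"
    by simp
qed

lemma rule_node_ok: "node_ok (phi P t @ replicate (Suc (length (cov_list B))) 0)"
proof -
  let ?s = "phi P t @ replicate (Suc (length (cov_list B))) 0"
  have "rul expanded ?s = Some (RRule R)"
    using rul_expand[OF t replicate_in_block[OF RB]] block_entry_rule[OF RB] by (simp del: replicate_Suc)
  moreover have "\<forall>m. ?s @ [m] \<in> nodes expanded \<longleftrightarrow> m < length (prms R)"
    using children_rule_node[OF t RB] by (simp del: replicate_Suc)
  moreover have "lbl expanded ?s = (cncl R, greedy_pre (\<iota> (cncl R)) B)"
    using lbl_expand[OF t replicate_in_block[OF RB]] block_entry_rule[OF RB] by (simp del: replicate_Suc)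
  moreover have "lbl expanded (?s @ [m]) = (prms R ! m, gs (\<iota> (cncl R)) (\<iota> (prms R ! m)) (tr R m) B)"
    if "m < length (prms R)" for m
    using lbl_expand[OF t weak_in_block[OF RB that]] block_entry_weak[OF RB] by (simp del: replicate_Suc)
  ultimately show ?thesis
    unfolding node_ok_def R_ok_def using greedy_choice_at rule_node_props[OF t RB]
    by (auto intro!: exI[of _ "length (prms R)"])
qed

lemma weak_node_ok:
  assumes i: "i < length (prms R)"
  shows "node_ok (phi P t @ replicate (Suc (length (cov_list B))) 0 @ [i])"
proof (rule node_ok_single_child)
  let ?s = "phi P t @ replicate (Suc (length (cov_list B))) 0 @ [i]"
  let ?Bs = "gs (\<iota> (cncl R)) (\<iota> (prms R ! i)) (tr R i) B"
  show "rul expanded ?s = Some RWeak"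
    using rul_expand[OF t weak_in_block[OF RB i]] block_entry_weak[OF RB] by simp
  show "\<forall>m. ?s @ [m] \<in> nodes expanded \<longleftrightarrow> m < 1"
    using children_weak_node[OF t RB i] by simp
  have "lbl expanded ?s = (prms R ! i, ?Bs)"
    using lbl_expand[OF t weak_in_block[OF RB i]] block_entry_weak[OF RB] by simp
  moreover have "?s @ [0] = phi P (t @ [i])"
    using cov_count_rule[OF RB] by (simp add: phi_snoc)
  then have "lbl expanded (?s @ [0]) = (prms R ! i, thin_board ?Bs)"
    using lbl_expand_phi rule_node_props[OF t RB] i by simp
  ultimately show "R_ok \<alpha> \<iota> cncl prms tr (lbl expanded ?s) RWeak [lbl expanded (?s @ [0])]"
    unfolding R_ok_def using weakening_thin_board by simp
qed

end

lemma expand_rules: "s \<in> nodes expanded \<Longrightarrow> node_ok s"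
proof -
  assume "s \<in> nodes expanded"
  then obtain t x where t: "t \<in> nodes P" and x: "x \<in> block t" and s: "s = phi P t @ x"
    unfolding nodes_expand_iff by blast
  show ?thesis
  proof (cases "rul P t")
    case None
    then show ?thesis using leaf_node_ok[OF t] x s block_leaf by simp
  next
    case (Some k)
    then obtain R B where RB: "rul P t = Some (R, B)" by (cases k) auto
    let ?k = "length (cov_list B)"
    from block_rule_cases[OF RB x] show ?thesis
    proof (elim disjE exE conjE)
      fix j assume "j \<le> Suc ?k" "x = replicate j 0"
      then consider "j < ?k" | "j = ?k" | "j = Suc ?k" by linarith
      then show ?thesis
        using reset_node_ok[OF t RB] pop_node_ok[OF t RB] rule_node_ok[OF t RB] s \<open>x = replicate j 0\<close>
        by cases simp_all
    next
      fix i assume "i < length (prms R)" "x = replicate (Suc ?k) 0 @ [i]"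
      then show ?thesis using weak_node_ok[OF t RB] s by simp
    qed
  qed
qed

lemma phi_append: "phi P (c @ w) = phi P c @ phi_aux (cov_count P) c w"
  unfolding phi_def phi_aux_append by simp

lemma expand_buds: "bud expanded s = Some c' \<Longrightarrow> s \<in> nodes expanded \<and> rul expanded s = None \<and> strict_prefix c' s
              \<and> (\<exists>j. c' @ [j] \<in> nodes expanded) \<and> lbl expanded c' = lbl expanded s"
proof -
  assume "bud expanded s = Some c'"
  then obtain t c where tc: "t \<in> nodes P" "bud P t = Some c" "s = phi P t" "c' = phi P c"
    using bud_expand_SomeD by blast
  have B: "rul P t = None" "strict_prefix c t" "\<exists>j. c @ [j] \<in> nodes P" "lbl P c = lbl P t"
    using bud_props[OF tc(2)] by blast+
  have c: "c \<in> nodes P" using S_prefix_closed[OF tc(1)] B(2) by (simp add: strict_prefix_def)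
  have s1: "s \<in> nodes expanded" unfolding nodes_expand_iff using tc(1,3) Nil_in_block by (metis append_Nil2)
  have s2: "rul expanded s = None" using rul_expand[OF tc(1) Nil_in_block] tc(3) B(1) by (simp add: block_entry_leaf)
  obtain w where w: "t = c @ w" "w \<noteq> []" using B(2) by (metis prefixE strict_prefix_def append_Nil2)
  have "phi P t = phi P c @ phi_aux (cov_count P) c w" using w(1) phi_append by simp
  moreover have "phi_aux (cov_count P) c w \<noteq> []" using w(2) by simp
  ultimately have s3: "strict_prefix c' s" using tc by (simp add: strict_prefix_def)
  obtain j where "c @ [j] \<in> nodes P" using B(3) by blast
  then obtain R B0 where RB: "rul P c = Some (R, B0)" using child_rule_node by blast
  have "replicate 1 0 \<in> block c" using replicate_in_block[OF RB, of 1] by simp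
  then have "[0] \<in> block c" by simp
  then have "phi P c @ [0] \<in> nodes expanded" unfolding nodes_expand_iff using c by blast
  then have s4: "\<exists>j. c' @ [j] \<in> nodes expanded" using tc by blast
  have s5: "lbl expanded c' = lbl expanded s" using lbl_expand_phi[OF c] lbl_expand_phi[OF tc(1)] B(4) tc by simp
  show ?thesis using s1 s2 s3 s4 s5 by blast
qed

lemma block_entry_rule_Some: "rul P t = Some k \<Longrightarrow> snd (block_entry t x) \<noteq> None"
  by (cases k) (simp add: block_entry_def)

lemma assumption_free_expand: "assumption_free expanded"
  unfolding assumption_free_def
proof (intro ballI impI)
  fix s assume s: "s \<in> nodes expanded" "rul expanded s = None"
  then obtain t x where tx: "t \<in> nodes P" "x \<in> block t" "s = phi P t @ x" unfolding nodes_expand_iff by blast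
  have "snd (block_entry t x) = None" using rul_expand[OF tx(1,2)] tx(3) s(2) by simp
  have N: "rul P t = None"
  proof (rule ccontr)
    assume "rul P t \<noteq> None"
    then obtain k where "rul P t = Some k" by blast
    then show False using block_entry_rule_Some \<open>snd (block_entry t x) = None\<close> by blast
  qed
  then have "x = []" using tx(2) block_leaf by simp
  obtain c where "bud P t = Some c" using leaf_is_bud[OF tx(1) N] by blast
  then show "bud expanded s \<noteq> None" using bud_expand_phi[OF tx(1)] tx(3) \<open>x = []\<close> by simp
qed

lemma preproof_expand: "is_preproof (R_seq \<iota>) (R_ok \<alpha> \<iota> cncl prms tr) expanded"
  unfolding is_preproof_def
  using finite_expand root_expand expand_prefix_closed expand_sequents expand_rules[unfolded node_ok_def] expand_buds by blast

section \<open>Invariants of the expanded buds\<close>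

lemma rule_child_ctrl:
  assumes t: "t \<in> nodes P" and RB: "rul P t = Some (R, B)" and i: "i < length (prms R)"
  defines "Bs \<equiv> gs (\<iota> (cncl R)) (\<iota> (prms R ! i)) (tr R i) B"
  shows "ctrl_step (fst B) (fst (snd (lbl P (t @ [i]))))
    \<and> (\<forall>\<theta>. prefix \<theta> (fst B) \<and> set \<theta> \<subseteq> set (fst (snd (lbl P (t @ [i])))) \<longrightarrow>
          (\<forall>j \<le> length (cov_list B). prefix \<theta> (fst (reset_stage B j)))
          \<and> prefix \<theta> (fst (greedy_pre (\<iota> (cncl R)) B))
          \<and> prefix \<theta> (fst Bs))"
proof -
  have "sparse \<alpha> (Kmax \<iota>) (\<iota> (cncl R)) B" using rule_node_props[OF t RB] by blast
  then have succ: "successor \<alpha> (tr R i) (greedy_pre (\<iota> (cncl R)) B) Bs"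
    and persist: "set (fst (thin_board Bs)) \<inter> set (fst B) = \<Inter> ((\<lambda>C. set (fst C)) `
      ({reset_stage B j | j. j \<le> length (cov_list B)} \<union> {greedy_pre (\<iota> (cncl R)) B, Bs, thin_board Bs}))"
    using greedy_choice_at[OF i] unfolding Bs_def by blast+
  have "fst (snd (lbl P (t @ [i]))) = fst (thin_board Bs)"
    using rule_node_props[OF t RB] i unfolding Bs_def by simp
  then show ?thesis
    using ctrl_step_greedy[OF succ persist] prefix_greedy_ctrls[OF succ persist] by simp
qed

lemma inf_path_bud_cycle:
  assumes bt: "bud P (c @ w) = Some c"
  shows "inf_path P (\<lambda>i. take (cycle_index (length c) (length w) i) (c @ w))"
proof -
  let ?ci = "cycle_index (length c) (length w)"
  let ?p = "\<lambda>i. take (?ci i) (c @ w)"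
  have "?p i \<in> nodes P \<and> ((\<exists>j. ?p (Suc i) = ?p i @ [j]) \<or> bud P (?p i) = Some (?p (Suc i)))" for i
  proof (cases "?ci i = length c + length w")
    case True
    then show ?thesis using bt bud_props[OF bt] by (simp add: cycle_index_Suc)
  next
    case False
    then have "?ci i < length (c @ w)"
      using cycle_index_le[of "length c" "length w" i] by simp
    then have "?p (Suc i) = ?p i @ [(c @ w) ! ?ci i]"
      using False by (simp add: cycle_index_Suc take_Suc_conv_app_nth del: take_append)
    then show ?thesis using S_prefix_closed bud_props[OF bt] take_is_prefix by blast
  qed
  then show ?thesis unfolding inf_path_def by (simp add: cycle_index_def)
qed

text \<open>Apply the S-proof condition to the path that runs around the bud cycle forever.\<close>
lemma bud_cycle_chip:
  assumes bt: "bud P (c @ w) = Some c" and w: "w \<noteq> []"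
  shows "\<exists>\<gamma>. (\<forall>m \<le> length w. \<gamma> \<in> set (fst (snd (lbl P (c @ take m w)))))
             \<and> (\<exists>m < length w. covered (snd (lbl P (c @ take m w))) \<gamma>)"
proof -
  let ?ci = "cycle_index (length c) (length w)"
  let ?p = "\<lambda>i. take (?ci i) (c @ w)"
  have p_take: "?p i = c @ take m w" if "?ci i = length c + m" for i m
    using that by simp
  obtain N \<gamma> where N: "\<forall>i\<ge>N. \<gamma> \<in> set (fst (snd (lbl P (?p i))))"
    and inf: "infinite {i. covered (snd (lbl P (?p i))) \<gamma>}"
    using S_path_condition[OF inf_path_bud_cycle[OF bt]] by blast
  have "\<gamma> \<in> set (fst (snd (lbl P (c @ take m w))))" if "m \<le> length w" for m
    using N[rule_format, of "length c + Suc (length w) * N + m"]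
      p_take[OF cycle_index_period[OF that]] by simp
  moreover obtain i where i: "length c \<le> i" "covered (snd (lbl P (?p i))) \<gamma>"
    using inf[unfolded infinite_nat_iff_unbounded_le, rule_format, of "length c"] by auto
  obtain m where "m \<le> length w" "?ci i = length c + m"
    using cycle_index_late[OF i(1)] by blast
  then have m: "m \<le> length w" "covered (snd (lbl P (c @ take m w))) \<gamma>"
    using i(2) by simp_all
  have "\<exists>m < length w. covered (snd (lbl P (c @ take m w))) \<gamma>"
  proof (cases "m = length w")
    case True
    then have "covered (snd (lbl P (c @ take 0 w))) \<gamma>" using m bud_props[OF bt] by simp
    then show ?thesis using w by (intro exI[of _ 0]) simp
  next
    case False
    then show ?thesis using m by (intro exI[of _ m]) simp
  qed
  ultimately show ?thesis by blast
qed

lemma prefix_ctrl_expanded_block: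
  assumes u: "u \<in> nodes P" and RB: "rul P u = Some (R, B)" "i < length (prms R)"
    and \<theta>: "prefix \<theta> (fst B)" "set \<theta> \<subseteq> set (fst (snd (lbl P (u @ [i]))))"
    and z: "prefix z (replicate (Suc (cov_count P u)) 0 @ [i])"
  shows "prefix \<theta> (fst (snd (lbl expanded (phi P u @ z))))"
proof -
  have pre: "\<forall>j \<le> length (cov_list B). prefix \<theta> (fst (reset_stage B j))"
    "prefix \<theta> (fst (greedy_pre (\<iota> (cncl R)) B))"
    "prefix \<theta> (fst (gs (\<iota> (cncl R)) (\<iota> (prms R ! i)) (tr R i) B))"
    using rule_child_ctrl[OF u RB] \<theta> by blast+
  from prefix_replicate_snoc_cases[OF z[unfolded cov_count_rule[OF RB(1)]]] show ?thesis
  proof (elim disjE conjE)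
    assume z: "z = replicate (length z) 0" "length z \<le> Suc (length (cov_list B))"
    have l: "lbl expanded (phi P u @ z) = fst (block_entry u z)"
      using lbl_expand[OF u replicate_in_block[OF RB(1) z(2)]] z(1) by simp
    show ?thesis
    proof (cases "length z \<le> length (cov_list B)")
      case True
      then show ?thesis using l pre z(1) block_entry_stage[OF RB(1) True] by (metis fst_conv snd_conv)
    next
      case False
      then have "z = replicate (Suc (length (cov_list B))) 0" using z by (metis le_SucE)
      then show ?thesis using l pre block_entry_rule[OF RB(1)] by simp
    qed
  next
    assume "z = replicate (Suc (length (cov_list B))) 0 @ [i]"
    then show ?thesis
      using lbl_expand[OF u weak_in_block[OF RB]] block_entry_weak[OF RB(1)] pre by simp
  qed
qed

context
  fixes t c w
  assumes bud: "bud P t = Some c" and t: "t = c @ w"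
begin

lemma bud_cycle_nonempty: "w \<noteq> []"
  using bud_props[OF bud] t by auto

lemma bud_cycle_node: "m \<le> length w \<Longrightarrow> c @ take m w \<in> nodes P"
  using S_prefix_closed bud_props[OF bud] unfolding t
  by (metis append_take_drop_id prefix_append prefixI take_all_iff)

lemma bud_cycle_Suc: "m < length w \<Longrightarrow> c @ take (Suc m) w = (c @ take m w) @ [w ! m]"
  by (simp add: take_Suc_conv_app_nth)

lemma bud_cycle_rule:
  "m < length w \<Longrightarrow> \<exists>R B. rul P (c @ take m w) = Some (R, B) \<and> w ! m < length (prms R)"
  using child_rule_node bud_cycle_node[of "Suc m"] bud_cycle_Suc by simp

lemma bud_cycle_ctrl_step:
  assumes m: "m < length w"
  shows "ctrl_step (fst (snd (lbl P (c @ take m w)))) (fst (snd (lbl P (c @ take (Suc m) w))))"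
proof -
  obtain R B where RB: "rul P (c @ take m w) = Some (R, B)" "w ! m < length (prms R)"
    using bud_cycle_rule[OF m] by blast
  then show ?thesis
    using rule_child_ctrl[OF bud_cycle_node RB] rule_node_props[OF bud_cycle_node RB(1)] bud_cycle_Suc m
    by simp
qed

lemma bud_cycle_invariant:
  obtains \<theta> m0 where "\<theta> \<noteq> []" "\<forall>m \<le> length w. prefix \<theta> (fst (snd (lbl P (c @ take m w))))"
    and "m0 < length w" "covered (snd (lbl P (c @ take m0 w))) (last \<theta>)"
proof -
  let ?\<Theta> = "\<lambda>m. fst (snd (lbl P (c @ take m w)))"
  obtain \<gamma> where \<gamma>: "\<forall>m \<le> length w. \<gamma> \<in> set (?\<Theta> m)"
    and cov: "\<exists>m < length w. covered (snd (lbl P (c @ take m w))) \<gamma>"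
    using bud_cycle_chip[OF bud[unfolded t] bud_cycle_nonempty] by blast
  have "?\<Theta> (length w) = ?\<Theta> 0" using bud_props[OF bud] t by simp
  moreover have "distinct (?\<Theta> 0)"
    using board_on_lbl[OF bud_cycle_node[of 0]] unfolding board_on_def by simp
  ultimately obtain \<theta> where "\<theta> \<noteq> []" "last \<theta> = \<gamma>" "\<forall>m \<le> length w. prefix \<theta> (?\<Theta> m)"
    using ctrl_cycle_common_prefix[of "length w" ?\<Theta> \<gamma>] bud_cycle_ctrl_step \<gamma> by blast
  then show ?thesis using that cov by blast
qed

lemma prefix_ctrl_expanded_bud_path:
  assumes \<theta>: "\<forall>m \<le> length w. prefix \<theta> (fst (snd (lbl P (c @ take m w))))"
    and s: "prefix (phi P c) s" "prefix s (phi P t)"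
  shows "prefix \<theta> (fst (snd (lbl expanded s)))"
proof -
  let ?cc = "cov_count P"
  obtain y where y: "s = phi P c @ y" using s(1) prefixE by metis
  have "prefix y (phi_aux ?cc c w)" using s(2) unfolding y t phi_append by simp
  from prefix_phi_aux_cases[OF this] show ?thesis
  proof (elim disjE exE conjE)
    assume "y = phi_aux ?cc c w"
    then have "s = phi P t" using y t phi_append by simp
    then show ?thesis using lbl_expand_phi bud_props[OF bud] \<theta> t by auto
  next
    fix m z assume m: "m < length w" and yz: "y = phi_aux ?cc c (take m w) @ z"
      and z: "prefix z (replicate (Suc (?cc (c @ take m w))) 0 @ [w ! m])"
    let ?u = "c @ take m w"
    obtain R B where RB: "rul P ?u = Some (R, B)" "w ! m < length (prms R)"
      using bud_cycle_rule[OF m] by blast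
    have u: "?u \<in> nodes P" using bud_cycle_node m by simp
    have "prefix \<theta> (fst B)"
      using \<theta>[rule_format, of m] m rule_node_props[OF u RB(1)] by simp
    moreover have "set \<theta> \<subseteq> set (fst (snd (lbl P (?u @ [w ! m]))))"
      using \<theta>[rule_format, of "Suc m"] m bud_cycle_Suc by (auto simp: prefix_def)
    ultimately show ?thesis
      using prefix_ctrl_expanded_block[OF u RB] z y yz by (simp add: phi_append)
  qed
qed

lemma reset_on_expanded_bud_path:
  assumes m0: "m0 < length w" and cov: "covered (snd (lbl P (c @ take m0 w))) \<gamma>"
  shows "\<exists>s. prefix (phi P c) s \<and> prefix s (phi P t) \<and> rul expanded s = Some (RReset \<gamma>)"
proof -
  let ?u = "c @ take m0 w"
  obtain R B where RB: "rul P ?u = Some (R, B)" "w ! m0 < length (prms R)"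
    using bud_cycle_rule[OF m0] by blast
  have u: "?u \<in> nodes P" using bud_cycle_node m0 by simp
  have "covered B \<gamma>" using cov rule_node_props[OF u RB(1)] by simp
  then have "\<gamma> \<in> set (rev (cov_list B))" unfolding cov_list_def covered_def by simp
  then obtain j where j: "j < length (cov_list B)" "rev (cov_list B) ! j = \<gamma>"
    by (metis in_set_conv_nth length_rev)
  let ?s = "phi P ?u @ replicate j 0"
  have "rul expanded ?s = Some (RReset \<gamma>)"
    using rul_expand[OF u replicate_in_block[OF RB(1)]] block_entry_reset[OF RB(1) j(1)] j by simp
  moreover have "prefix (phi P c) ?s" by (simp add: phi_append)
  moreover have "prefix ?s (phi P t)"
  proof -
    have "t = ?u @ drop m0 w" using t by simp
    then have "phi P t = phi P ?u @ phi_aux (cov_count P) ?u (drop m0 w)" by (metis phi_append)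
    moreover have "drop m0 w = w ! m0 # drop (Suc m0) w" using m0 by (simp add: Cons_nth_drop_Suc)
    ultimately have "phi P t = phi P ?u @ replicate (Suc (length (cov_list B))) 0 @ [w ! m0, 0]
        @ phi_aux (cov_count P) (?u @ [w ! m0]) (drop (Suc m0) w)"
      using cov_count_rule[OF RB(1)] by (simp del: replicate_Suc)
    moreover have "replicate (Suc (length (cov_list B))) (0::nat)
        = replicate j 0 @ replicate (Suc (length (cov_list B)) - j) 0"
      using j(1) by (simp add: replicate_add[symmetric])
    ultimately show ?thesis by (simp del: replicate_Suc)
  qed
  ultimately show ?thesis by blast
qed

end

lemma expand_invariant:
  assumes "bud expanded s = Some c'"
  shows "\<exists>\<theta>. \<theta> \<noteq> [] \<and> (\<forall>s'. prefix c' s' \<and> prefix s' s \<longrightarrow> prefix \<theta> (fst (snd (lbl expanded s'))))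
               \<and> (\<exists>s'. prefix c' s' \<and> prefix s' s \<and> rul expanded s' = Some (RReset (last \<theta>)))"
proof -
  obtain t c where bud: "bud P t = Some c" and s: "s = phi P t" and c': "c' = phi P c"
    using bud_expand_SomeD[OF assms] by blast
  obtain w where t: "t = c @ w" using bud_props[OF bud] by (metis prefixE strict_prefix_def)
  obtain \<theta> m0 where "\<theta> \<noteq> []" and \<theta>: "\<forall>m \<le> length w. prefix \<theta> (fst (snd (lbl P (c @ take m w))))"
    and "m0 < length w" "covered (snd (lbl P (c @ take m0 w))) (last \<theta>)"
    using bud_cycle_invariant[OF bud t] by blast
  then show ?thesis
    using prefix_ctrl_expanded_bud_path[OF bud t \<theta>] reset_on_expanded_bud_path[OF bud t] s c' by blast
qed

lemma R_proof_expand: "R_proof \<alpha> \<iota> cncl prms tr expanded"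
  unfolding R_proof_def using preproof_expand assumption_free_expand expand_invariant by blast

end

theorem mainTheorem10:
  fixes \<alpha> :: "'a::{finite,semilattice_sup,order_bot}"
    and \<iota> :: "'s::finite \<Rightarrow> 'x set"
    and cncl :: "'r::finite \<Rightarrow> 's"
    and prms :: "'r \<Rightarrow> 's list"
    and tr :: "'r \<Rightarrow> nat \<Rightarrow> ('x \<times> 'a \<times> 'x) set"
    and gs :: "'x set \<Rightarrow> 'x set \<Rightarrow> ('x \<times> 'a \<times> 'x) set \<Rightarrow> ('x,'a) board \<Rightarrow> ('x,'a) board"
    and \<Pi> :: "('s \<times> ('x,'a) board, 'r \<times> ('x,'a) board) preproof"
  assumes "\<alpha> \<noteq> bot"
    and "\<forall>\<Gamma>. finite (\<iota> \<Gamma>)"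
    and "\<forall>R i. i < length (prms R) \<longrightarrow> tr R i \<subseteq> \<iota> (cncl R) \<times> UNIV \<times> \<iota> (prms R ! i)"
    and "greedy_choice_ok \<alpha> (Kmax \<iota>) \<iota> cncl prms tr gs"
    and "S_proof \<alpha> (Kmax \<iota>) \<iota> cncl prms tr gs \<Pi>"
  shows "R_proof \<alpha> \<iota> cncl prms tr (expand \<iota> cncl prms tr gs \<Pi>)"
proof -
  interpret S_proof_setting \<alpha> \<iota> cncl prms tr gs \<Pi>
    using assms by unfold_locales
  show ?thesis by (rule R_proof_expand)
qed

end
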